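(* Let $p\in[1,\infty]$, $\alpha\in[0,1]$ irrational, $\theta\in[0,1)$ and $\lambda\in\mathbb{R}$. Then $\sigma(H_{\lambda,\alpha,\theta})\subset\sigma((H_{\lambda,\alpha,\theta})_+)$.
   Context: $(H_{\lambda,\alpha,\theta}x)_n=x_{n+1}+x_{n-1}+\lambda v_{\alpha,\theta}(n)x_n$ on $\ell^p(\mathbb{Z})$ with $v_{\alpha,\theta}(n)=\chi_{[1-\alpha,1)}(n\alpha+\theta\bmod 1)$. For an operator $A=(a_{ij})_{i,j\in\mathbb{Z}}$, $A_+:=(a_{ij})_{i,j=0}^\infty$ acting on $\ell^p(\mathbb{Z}_+)$, $\mathbb{Z}_+=\{0,1,2,\dots\}$. *)

theory Defs
  imports "HOL-Analysis.Analysis"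
begin

definition lp_space :: "ereal \<Rightarrow> ('i \<Rightarrow> complex) set" where
  "lp_space p = {x. if p = \<infinity> then bounded (range x)
                    else (\<lambda>n. norm (x n) powr real_of_ereal p) summable_on UNIV}"

text \<open>By the open mapping theorem,
  invertibility in B(X) is equivalent to bijectivity of A - z I on X.\<close>
definition op_spectrum :: "('i \<Rightarrow> complex) set \<Rightarrow> (('i \<Rightarrow> complex) \<Rightarrow> ('i \<Rightarrow> complex)) \<Rightarrow> complex set" where
  "op_spectrum X A = {z. \<not> bij_betw (\<lambda>x n. A x n - z * x n) X X}"

definition sturm_pot :: "real \<Rightarrow> real \<Rightarrow> int \<Rightarrow> real" where
  "sturm_pot \<alpha> \<theta> n = (if frac (of_int n * \<alpha> + \<theta>) \<in> {1 - \<alpha> ..< 1} then 1 else 0)"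

definition H_op :: "real \<Rightarrow> real \<Rightarrow> real \<Rightarrow> (int \<Rightarrow> complex) \<Rightarrow> (int \<Rightarrow> complex)" where
  "H_op lam \<alpha> \<theta> x n = x (n + 1) + x (n - 1) + of_real (lam * sturm_pot \<alpha> \<theta> n) * x n"

definition H_plus :: "real \<Rightarrow> real \<Rightarrow> real \<Rightarrow> (nat \<Rightarrow> complex) \<Rightarrow> (nat \<Rightarrow> complex)" where
  "H_plus lam \<alpha> \<theta> x n = x (n + 1) + (if n = 0 then 0 else x (n - 1))
      + of_real (lam * sturm_pot \<alpha> \<theta> (int n)) * x n"

end

theory Submission
  imports Defs
begin

text \<open>
  Let \<open>z\<close> lie outside \<open>\<sigma>(H\<^sub>+)\<close>, so that \<open>A = H\<^sub>+ - z\<close> is a bijection of \<open>\<ell>\<^sup>p(\<int>\<^sub>+)\<close>. A gliding hump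
  argument shows that \<open>A\<close> is bounded below on vectors supported far from the boundary; no open
  mapping theorem is needed. The Sturmian potential is recurrent: by Kronecker's theorem every finite
  window of it reappears arbitrarily far to the right. Moving a finitely supported vector on \<open>\<int>\<close>
  there shows that \<open>B = H - z\<close> is bounded below, uniformly, on all finite sections.

  For a tridiagonal operator with bounded coefficients this already forces invertibility on
  \<open>\<ell>\<^sup>p(\<int>)\<close>. Testing the lower bound against a tent-shaped cut-off of a solution of \<open>B\<phi> = 0\<close> shows
  that the masses of \<open>\<phi>\<close> on consecutive blocks of length \<open>L \<sim> C\<close> satisfy
  \<open>m\<^sub>j \<le> max m\<^sub>j\<^sub>-\<^sub>1 m\<^sub>j\<^sub>+\<^sub>1 / 2\<close>. Hence bounded solutions vanish (injectivity), there are solutions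
  decaying at \<open>+\<infinity>\<close> and at \<open>-\<infinity>\<close>, which are necessarily independent, and from them one builds
  solutions of \<open>Bx = y\<close> on growing windows; truncated and controlled by the lower bound, these
  converge to a solution in \<open>\<ell>\<^sup>p\<close> (surjectivity).
\<close>

section \<open>Finite sections of \<open>\<ell>\<^sup>p\<close> norms\<close>

definition lp_exponent :: "ereal \<Rightarrow> real" where
  "lp_exponent p = (if p = \<infinity> then 1 else real_of_ereal p)"

text \<open>For \<open>p < \<infinity>\<close>, \<open>lp_mass p x S\<close> is the \<open>p\<close>-th power of the \<open>\<ell>\<^sup>p\<close> norm of \<open>x\<close> restricted to
  the finite set \<open>S\<close>; for \<open>p = \<infinity>\<close> it is the sup norm on \<open>S\<close>. Either way it is homogeneous of
  degree \<open>lp_exponent p\<close>.\<close>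

definition lp_mass :: "ereal \<Rightarrow> ('i \<Rightarrow> complex) \<Rightarrow> 'i set \<Rightarrow> real" where
  "lp_mass p x S = (if p = \<infinity> then Max (insert 0 ((\<lambda>n. norm (x n)) ` S))
                    else (\<Sum>n\<in>S. norm (x n) powr real_of_ereal p))"

definition lp_combine :: "ereal \<Rightarrow> real \<Rightarrow> real \<Rightarrow> real" where
  "lp_combine p a b = (if p = \<infinity> then max a b else a powr lp_exponent p + b)"

lemma lp_exponent_ge_1: "1 \<le> p \<Longrightarrow> 1 \<le> lp_exponent p"
  unfolding lp_exponent_def by (cases p) auto

lemma lp_exponent_pos: "1 \<le> p \<Longrightarrow> 0 < lp_exponent p"
  using lp_exponent_ge_1[of p] by linarith

lemma lp_mass_empty [simp]: "lp_mass p x {} = 0"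
  unfolding lp_mass_def by simp

lemma lp_mass_insert:
  assumes "finite S" "n \<notin> S"
  shows "lp_mass p x (insert n S) = lp_combine p (norm (x n)) (lp_mass p x S)"
proof (cases "p = \<infinity>")
  case True
  have "insert 0 (insert (norm (x n)) ((\<lambda>n. norm (x n)) ` S))
      = insert (norm (x n)) (insert 0 ((\<lambda>n. norm (x n)) ` S))" by auto
  then show ?thesis
    using True assms by (simp add: lp_mass_def lp_combine_def)
next
  case False
  then show ?thesis using assms unfolding lp_mass_def lp_combine_def lp_exponent_def by simp
qed

lemma lp_mass_singleton: "lp_mass p x {n} = norm (x n) powr lp_exponent p"
  using lp_mass_insert[of "{}" n p x] by (simp add: lp_combine_def lp_exponent_def)

lemma lp_mass_nonneg: "finite S \<Longrightarrow> 0 \<le> lp_mass p x S"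
  unfolding lp_mass_def by (auto intro: sum_nonneg)

lemma lp_combine_mono:
  "1 \<le> p \<Longrightarrow> 0 \<le> a \<Longrightarrow> a \<le> a' \<Longrightarrow> b \<le> b' \<Longrightarrow> lp_combine p a b \<le> lp_combine p a' b'"
  unfolding lp_combine_def using lp_exponent_pos[of p] by (auto intro!: add_mono powr_mono2)

lemma lp_mass_mono:
  assumes "finite S" "1 \<le> p" "\<And>n. n \<in> S \<Longrightarrow> norm (x n) \<le> norm (y n)"
  shows "lp_mass p x S \<le> lp_mass p y S"
  using assms(1,3)
  by (induction S rule: finite_induct) (simp_all add: lp_mass_insert lp_combine_mono assms(2))

lemma lp_mass_cong:
  assumes "\<And>n. n \<in> S \<Longrightarrow> norm (x n) = norm (y n)"
  shows "lp_mass p x S = lp_mass p y S"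
proof -
  have "(\<lambda>n. norm (x n)) ` S = (\<lambda>n. norm (y n)) ` S" by (rule image_cong) (auto simp: assms)
  moreover have "(\<Sum>n\<in>S. norm (x n) powr real_of_ereal p) = (\<Sum>n\<in>S. norm (y n) powr real_of_ereal p)"
    by (rule sum.cong) (auto simp: assms)
  ultimately show ?thesis unfolding lp_mass_def by simp
qed

lemma lp_mass_zero: "(\<And>n. n \<in> S \<Longrightarrow> x n = 0) \<Longrightarrow> lp_mass p x S = 0"
  using lp_mass_cong[of S x "\<lambda>_. 0" p] by (simp add: lp_mass_def image_constant_conv)

lemma lp_mass_subset:
  assumes "finite T" "S \<subseteq> T"
  shows "lp_mass p x S \<le> lp_mass p x T"
proof (cases "p = \<infinity>")
  case True
  have "Max (insert 0 ((\<lambda>n. norm (x n)) ` S)) \<le> Max (insert 0 ((\<lambda>n. norm (x n)) ` T))"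
    by (rule Max_mono) (use assms in auto)
  then show ?thesis using True unfolding lp_mass_def by simp
next
  case False
  then show ?thesis using assms unfolding lp_mass_def by (auto intro!: sum_mono2)
qed

lemma lp_mass_union_le:
  assumes "finite S" "finite T"
  shows "lp_mass p x (S \<union> T) \<le> lp_mass p x S + lp_mass p x T"
proof (cases "p = \<infinity>")
  case True
  let ?f = "\<lambda>n. norm (x n)"
  have "insert 0 (?f ` (S \<union> T)) = insert 0 (?f ` S) \<union> insert 0 (?f ` T)" by auto
  moreover have "Max (insert 0 (?f ` S) \<union> insert 0 (?f ` T))
      = max (Max (insert 0 (?f ` S))) (Max (insert 0 (?f ` T)))"
    by (rule Max_Un) (use assms in auto)
  ultimately have "Max (insert 0 (?f ` (S \<union> T))) = max (Max (insert 0 (?f ` S))) (Max (insert 0 (?f ` T)))"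
    by simp
  moreover have "0 \<le> Max (insert 0 (?f ` S))" "0 \<le> Max (insert 0 (?f ` T))"
    using assms by auto
  ultimately show ?thesis using True unfolding lp_mass_def by simp
next
  case False
  have "0 \<le> (\<Sum>n\<in>S \<inter> T. norm (x n) powr real_of_ereal p)" by (rule sum_nonneg) simp
  then show ?thesis
    using False sum_Un[OF assms, of "\<lambda>n. norm (x n) powr real_of_ereal p"] unfolding lp_mass_def by simp
qed

lemma lp_mass_UN_le:
  fixes K :: nat
  assumes "\<And>k. finite (E k)"
  shows "lp_mass p x (\<Union>k<K. E k) \<le> (\<Sum>k<K. lp_mass p x (E k))"
proof (induction K)
  case (Suc K)
  have "(\<Union>k<Suc K. E k) = (\<Union>k<K. E k) \<union> E K" by (auto simp: lessThan_Suc)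
  then show ?case
    using Suc lp_mass_union_le[of "\<Union>k<K. E k" "E K" p x] assms by simp
qed simp

lemma lp_mass_le_support:
  assumes "finite S" "finite W" "\<And>n. n \<in> S \<Longrightarrow> n \<notin> W \<Longrightarrow> x n = 0"
  shows "lp_mass p x S \<le> lp_mass p x W"
proof -
  have "lp_mass p x S \<le> lp_mass p x ((S - W) \<union> W)" by (rule lp_mass_subset) (use assms in auto)
  also have "\<dots> \<le> lp_mass p x (S - W) + lp_mass p x W" by (rule lp_mass_union_le) (use assms in auto)
  also have "lp_mass p x (S - W) = 0" by (rule lp_mass_zero) (use assms in auto)
  finally show ?thesis by simp
qed

lemma norm_powr_le_lp_mass:
  assumes "finite S" "n \<in> S"
  shows "norm (x n) powr lp_exponent p \<le> lp_mass p x S"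
  using lp_mass_subset[of S "{n}" p x] assms by (simp add: lp_mass_singleton)

lemma lp_mass_scale:
  assumes "finite S" "1 \<le> p"
  shows "lp_mass p (\<lambda>n. t * x n) S = norm t powr lp_exponent p * lp_mass p x S"
  using assms(1)
proof (induction S rule: finite_induct)
  case (insert n S)
  have "lp_combine p (norm (t * x n)) (norm t powr lp_exponent p * lp_mass p x S)
       = norm t powr lp_exponent p * lp_combine p (norm (x n)) (lp_mass p x S)"
  proof (cases "p = \<infinity>")
    case True
    then show ?thesis unfolding lp_combine_def lp_exponent_def
      by (cases "t = 0") (auto simp: norm_mult max_mult_distrib_left)
  next
    case False
    then show ?thesis unfolding lp_combine_def by (simp add: norm_mult powr_mult distrib_left)
  qed
  then show ?case using insert by (simp add: lp_mass_insert)
qed simp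

lemma lp_mass_add_le:
  assumes "finite S" "1 \<le> p"
  shows "lp_mass p (\<lambda>n. x n + y n) S \<le> 2 powr lp_exponent p * (lp_mass p x S + lp_mass p y S)"
  using assms(1)
proof (induction S rule: finite_induct)
  case (insert n S)
  let ?e = "lp_exponent p" and ?a = "norm (x n)" and ?b = "norm (y n)"
  have nn: "0 \<le> lp_mass p x S" "0 \<le> lp_mass p y S" using insert by (auto intro: lp_mass_nonneg)
  have xy: "norm (x n + y n) \<le> ?a + ?b" by (rule norm_triangle_ineq)
  show ?case
  proof (cases "p = \<infinity>")
    case True
    let ?mx = "max ?a (lp_mass p x S)" and ?my = "max ?b (lp_mass p y S)"
    have "?e = 1" using True by (simp add: lp_exponent_def)
    then have "lp_mass p (\<lambda>n. x n + y n) S \<le> 2 * (lp_mass p x S + lp_mass p y S)"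
      using insert.IH by simp
    moreover have "lp_mass p x S \<le> ?mx" "lp_mass p y S \<le> ?my" "?a \<le> ?mx" "?b \<le> ?my" "0 \<le> ?mx" "0 \<le> ?my"
      using nn by auto
    ultimately have "norm (x n + y n) \<le> 2 * (?mx + ?my)" and "lp_mass p (\<lambda>n. x n + y n) S \<le> 2 * (?mx + ?my)"
      using xy unfolding distrib_left by linarith+
    then have "max (norm (x n + y n)) (lp_mass p (\<lambda>n. x n + y n) S) \<le> 2 * (?mx + ?my)"
      by simp
    then show ?thesis using True insert \<open>?e = 1\<close> by (simp add: lp_mass_insert lp_combine_def)
  next
    case False
    have "norm (x n + y n) powr ?e \<le> (2 * max ?a ?b) powr ?e"
      using xy lp_exponent_pos[OF assms(2)] by (intro powr_mono2) auto
    also have "\<dots> = 2 powr ?e * max ?a ?b powr ?e"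
      by (simp add: powr_mult)
    also have "\<dots> \<le> 2 powr ?e * (?a powr ?e + ?b powr ?e)"
      by (intro mult_left_mono) (auto simp: max_def)
    finally show ?thesis using False insert
      by (simp add: lp_mass_insert lp_combine_def distrib_left)
  qed
qed simp

lemma lp_mass_le_card:
  assumes "finite S" "1 \<le> p" "0 \<le> K" "\<And>n. n \<in> S \<Longrightarrow> norm (x n) \<le> K"
  shows "lp_mass p x S \<le> real (card S) * K powr lp_exponent p"
  using assms(1,4)
proof (induction S rule: finite_induct)
  case (insert n S)
  have IH: "lp_mass p x S \<le> real (card S) * K powr lp_exponent p" and xn: "norm (x n) \<le> K"
    using insert by auto
  show ?case
  proof (cases "p = \<infinity>")
    case True
    then have "lp_mass p x (insert n S) = max (norm (x n)) (lp_mass p x S)"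
      "real (card (insert n S)) * K powr lp_exponent p = K + real (card S) * K"
      "lp_mass p x S \<le> real (card S) * K"
      using insert IH assms(3) by (simp_all add: lp_mass_insert lp_combine_def lp_exponent_def algebra_simps)
    moreover have "0 \<le> real (card S) * K" using assms(3) by simp
    moreover have "norm (x n) \<le> K + real (card S) * K" using xn \<open>0 \<le> real (card S) * K\<close> by linarith
    ultimately show ?thesis using assms(3) by (simp add: max.bounded_iff)
  next
    case False
    have "norm (x n) powr lp_exponent p \<le> K powr lp_exponent p"
      using xn lp_exponent_pos[OF assms(2)] by (intro powr_mono2) auto
    then show ?thesis using False insert IH
      by (simp add: lp_mass_insert lp_combine_def algebra_simps)
  qed
qed simp

lemma lp_mass_reindex:
  "inj_on f S \<Longrightarrow> lp_mass p (\<lambda>n. x (f n)) S = lp_mass p x (f ` S)"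
  unfolding lp_mass_def by (simp add: sum.reindex image_image)

lemma tendsto_lp_mass:
  assumes "finite S" "1 \<le> p" "\<And>n. n \<in> S \<Longrightarrow> ((\<lambda>t. f t n) \<longlongrightarrow> g n) F"
  shows "((\<lambda>t. lp_mass p (f t) S) \<longlongrightarrow> lp_mass p g S) F"
  using assms(1,3)
proof (induction S rule: finite_induct)
  case (insert n S)
  have fn: "((\<lambda>t. norm (f t n)) \<longlongrightarrow> norm (g n)) F"
    by (intro tendsto_norm insert.prems) simp
  have fS: "((\<lambda>t. lp_mass p (f t) S) \<longlongrightarrow> lp_mass p g S) F"
    by (intro insert.IH insert.prems) simp
  have "((\<lambda>t. norm (f t n) powr lp_exponent p) \<longlongrightarrow> norm (g n) powr lp_exponent p) F"
    by (rule tendsto_powr'[OF fn tendsto_const]) (use lp_exponent_pos[OF assms(2)] in auto)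
  then have "((\<lambda>t. lp_combine p (norm (f t n)) (lp_mass p (f t) S))
      \<longlongrightarrow> lp_combine p (norm (g n)) (lp_mass p g S)) F"
    unfolding lp_combine_def using tendsto_max[OF fn fS] tendsto_add[OF _ fS] by (cases "p = \<infinity>") simp_all
  then show ?case using insert by (simp add: lp_mass_insert)
qed simp

lemma lp_space_iff_lp_mass_bounded:
  assumes "1 \<le> p"
  shows "x \<in> lp_space p \<longleftrightarrow> (\<exists>K. \<forall>S. finite S \<longrightarrow> lp_mass p x S \<le> K)"
proof (cases "p = \<infinity>")
  case True
  have "bounded (range x) \<longleftrightarrow> (\<exists>K. \<forall>S. finite S \<longrightarrow> lp_mass p x S \<le> K)"
  proof
    assume "bounded (range x)"
    then obtain K where K: "\<And>n. norm (x n) \<le> K" by (auto simp: bounded_iff)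
    then have "0 \<le> K" using norm_ge_zero[of "x undefined"] by (meson order_trans)
    then have "lp_mass p x S \<le> max K 0" if "finite S" for S
      using True that K by (simp add: lp_mass_def Max_le_iff le_max_iff_disj)
    then show "\<exists>K. \<forall>S. finite S \<longrightarrow> lp_mass p x S \<le> K" by blast
  next
    assume "\<exists>K. \<forall>S. finite S \<longrightarrow> lp_mass p x S \<le> K"
    then obtain K where K: "\<And>S. finite S \<Longrightarrow> lp_mass p x S \<le> K" by blast
    have "norm (x n) \<le> K" for n
      using K[of "{n}"] lp_mass_singleton[of p x n] True by (simp add: lp_exponent_def)
    then show "bounded (range x)" by (auto simp: bounded_iff)
  qed
  then show ?thesis using True by (simp add: lp_space_def)
next
  case False
  let ?f = "\<lambda>n. norm (x n) powr real_of_ereal p"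
  have "?f summable_on UNIV \<longleftrightarrow> (\<exists>K. \<forall>S. finite S \<longrightarrow> lp_mass p x S \<le> K)"
  proof
    assume s: "?f summable_on UNIV"
    have "lp_mass p x S \<le> infsum ?f UNIV" if "finite S" for S
      using False finite_sum_le_infsum[OF s that] unfolding lp_mass_def by auto
    then show "\<exists>K. \<forall>S. finite S \<longrightarrow> lp_mass p x S \<le> K" by blast
  next
    assume "\<exists>K. \<forall>S. finite S \<longrightarrow> lp_mass p x S \<le> K"
    then show "?f summable_on UNIV"
      using False by (intro nonneg_bdd_above_summable_on) (auto simp: lp_mass_def bdd_above_def)
  qed
  then show ?thesis using False by (simp add: lp_space_def)
qed

lemma zero_in_lp_space: "1 \<le> p \<Longrightarrow> (\<lambda>_. 0) \<in> lp_space p"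
  by (auto simp: lp_space_iff_lp_mass_bounded lp_mass_zero)

lemma lp_space_bounded:
  assumes "1 \<le> p" "x \<in> lp_space p"
  shows "\<exists>B. \<forall>n. norm (x n) \<le> B"
proof -
  obtain K where K: "\<And>S. finite S \<Longrightarrow> lp_mass p x S \<le> K"
    using assms lp_space_iff_lp_mass_bounded by blast
  have "norm (x n) \<le> max 1 K" for n
  proof (cases "norm (x n) \<le> 1")
    case False
    then have "norm (x n) \<le> norm (x n) powr lp_exponent p"
      using powr_mono[OF lp_exponent_ge_1[OF assms(1)], of "norm (x n)"] by simp
    also have "\<dots> \<le> K" using K[of "{n}"] by (simp add: lp_mass_singleton)
    finally show ?thesis by simp
  qed simp
  then show ?thesis by blast
qed

lemma le_of_powr_le_powr: "0 < d \<Longrightarrow> 0 \<le> a \<Longrightarrow> 0 \<le> e \<Longrightarrow> a powr d \<le> e powr d \<Longrightarrow> (a::real) \<le> e"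
  using powr_less_mono2[of d e a] by linarith

lemma lp_space_add:
  assumes "1 \<le> p" "x \<in> lp_space p" "y \<in> lp_space p"
  shows "(\<lambda>n. x n + y n) \<in> lp_space p"
proof -
  obtain Kx Ky where "\<And>S. finite S \<Longrightarrow> lp_mass p x S \<le> Kx" "\<And>S. finite S \<Longrightarrow> lp_mass p y S \<le> Ky"
    using assms lp_space_iff_lp_mass_bounded by metis
  then have "lp_mass p (\<lambda>n. x n + y n) S \<le> 2 powr lp_exponent p * (Kx + Ky)" if "finite S" for S
    using lp_mass_add_le[OF that assms(1), of x y] that
    by (smt (verit) mult_left_mono powr_ge_zero)
  then show ?thesis using lp_space_iff_lp_mass_bounded[OF assms(1)] by blast
qed

lemma lp_space_mult_bounded:
  assumes "1 \<le> p" "x \<in> lp_space p" "\<And>n. norm (a n) \<le> M"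
  shows "(\<lambda>n. a n * x n) \<in> lp_space p"
proof -
  obtain K where K: "\<And>S. finite S \<Longrightarrow> lp_mass p x S \<le> K"
    using assms lp_space_iff_lp_mass_bounded by metis
  have M: "0 \<le> M" using assms(3) norm_ge_zero order_trans by blast
  have "lp_mass p (\<lambda>n. a n * x n) S \<le> M powr lp_exponent p * K" if S: "finite S" for S
  proof -
    have "lp_mass p (\<lambda>n. a n * x n) S \<le> lp_mass p (\<lambda>n. of_real M * x n) S"
      by (rule lp_mass_mono[OF S assms(1)]) (use assms(3) M in \<open>auto simp: norm_mult intro: mult_right_mono\<close>)
    also have "\<dots> = M powr lp_exponent p * lp_mass p x S" using lp_mass_scale[OF S assms(1)] M by simp
    also have "\<dots> \<le> M powr lp_exponent p * K" using K S by (intro mult_left_mono) auto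
    finally show ?thesis .
  qed
  then show ?thesis using lp_space_iff_lp_mass_bounded[OF assms(1)] by blast
qed

lemma lp_space_shift:
  fixes x :: "int \<Rightarrow> complex"
  assumes "1 \<le> p" "x \<in> lp_space p"
  shows "(\<lambda>n. x (n + k)) \<in> lp_space p"
proof -
  obtain K where K: "\<And>S. finite S \<Longrightarrow> lp_mass p x S \<le> K"
    using assms lp_space_iff_lp_mass_bounded by metis
  have "lp_mass p (\<lambda>n. x (n + k)) S = lp_mass p x ((\<lambda>n. n + k) ` S)" for S
    by (rule lp_mass_reindex) (auto simp: inj_on_def)
  then have "finite S \<Longrightarrow> lp_mass p (\<lambda>n. x (n + k)) S \<le> K" for S using K by simp
  then show ?thesis using lp_space_iff_lp_mass_bounded[OF assms(1)] by blast
qed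

section \<open>Jacobi operators on \<open>\<int>\<close>\<close>

definition jacobi :: "(int \<Rightarrow> complex) \<Rightarrow> (int \<Rightarrow> complex) \<Rightarrow> int \<Rightarrow> complex" where
  "jacobi c x n = x (n + 1) + x (n - 1) + c n * x n"

lemma jacobi_add: "jacobi c (\<lambda>n. x n + y n) n = jacobi c x n + jacobi c y n"
  unfolding jacobi_def by (simp add: algebra_simps)

lemma jacobi_diff: "jacobi c (\<lambda>n. x n - y n) n = jacobi c x n - jacobi c y n"
  unfolding jacobi_def by (simp add: algebra_simps)

lemma jacobi_scale: "jacobi c (\<lambda>n. t * x n) n = t * jacobi c x n"
  unfolding jacobi_def by (simp add: algebra_simps)

lemma jacobi_reflect: "jacobi (\<lambda>n. c (- n)) (\<lambda>n. x (- n)) n = jacobi c x (- n)"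
proof -
  have "- (n + 1) = - n - 1" "- (n - 1) = - n + 1" by simp_all
  then show ?thesis unfolding jacobi_def by (simp only: add_ac)
qed

lemma jacobi_shift: "jacobi (\<lambda>n. c (n + s)) (\<lambda>n. x (n + s)) n = jacobi c x (n + s)"
  unfolding jacobi_def by (simp add: algebra_simps)

function jacobi_ivp :: "(int \<Rightarrow> complex) \<Rightarrow> (int \<Rightarrow> complex) \<Rightarrow> complex \<Rightarrow> complex \<Rightarrow> int \<Rightarrow> complex" where
  "jacobi_ivp c f a b n =
     (if n = 0 then a else if n = 1 then b
      else if 1 < n then f (n - 1) - jacobi_ivp c f a b (n - 2) - c (n - 1) * jacobi_ivp c f a b (n - 1)
      else f (n + 1) - jacobi_ivp c f a b (n + 2) - c (n + 1) * jacobi_ivp c f a b (n + 1))"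
  by auto
termination
  by (relation "Wellfounded.measure (\<lambda>(c, f, a, b, n). nat (if 1 \<le> n then n else 1 - n))") auto

declare jacobi_ivp.simps [simp del]

lemma jacobi_jacobi_ivp: "jacobi c (jacobi_ivp c f a b) n = f n"
proof (cases "1 \<le> n")
  case True
  then show ?thesis
    using jacobi_ivp.simps[of c f a b "n + 1"] unfolding jacobi_def by simp
next
  case False
  then show ?thesis
    using jacobi_ivp.simps[of c f a b "n - 1"] unfolding jacobi_def by (simp add: add.commute)
qed

lemma jacobi_solution_exists: "\<exists>x. (\<forall>n. jacobi c x n = f n) \<and> x s = a \<and> x (s + 1) = b"
proof -
  define x where "x n = jacobi_ivp (\<lambda>n. c (n + s)) (\<lambda>n. f (n + s)) a b (n - s)" for n
  have "jacobi c x n = f n" for n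
    using jacobi_shift[of c s x "n - s"] jacobi_jacobi_ivp[of "\<lambda>n. c (n + s)" "\<lambda>n. f (n + s)" a b "n - s"]
    unfolding x_def by simp
  moreover have "x s = a" "x (s + 1) = b"
    unfolding x_def by (simp_all add: jacobi_ivp.simps)
  ultimately show ?thesis by blast
qed

lemma jacobi_zero_right:
  assumes "\<And>n. s < n \<Longrightarrow> jacobi c h n = 0" "h s = 0" "h (s + 1) = 0" "s \<le> n"
  shows "h n = 0"
proof -
  have "h n = 0 \<and> h (n + 1) = 0"
    using assms(4)
  proof (induction n rule: int_ge_induct)
    case (step i)
    then have "h (i + 1 + 1) + h i + c (i + 1) * h (i + 1) = 0"
      using assms(1)[of "i + 1"] unfolding jacobi_def by simp
    then show ?case using step by simp
  qed (use assms in simp)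
  then show ?thesis by simp
qed

lemma jacobi_zero_left:
  assumes "\<And>n. n \<le> s \<Longrightarrow> jacobi c h n = 0" "h s = 0" "h (s + 1) = 0" "n \<le> s + 1"
  shows "h n = 0"
proof -
  have "h (n - 1) = 0 \<and> h n = 0"
    using assms(4)
  proof (induction n rule: int_le_induct)
    case (step i)
    then have "h i + h (i - 1 - 1) + c (i - 1) * h (i - 1) = 0"
      using assms(1)[of "i - 1"] unfolding jacobi_def by simp
    then show ?case using step by simp
  qed (use assms in simp)
  then show ?thesis by simp
qed

lemma jacobi_kernel_zero:
  assumes "\<And>n. jacobi c h n = 0" "h s = 0" "h (s + 1) = 0"
  shows "h n = 0"
  using jacobi_zero_right[of s c h n] jacobi_zero_left[of s c h n] assms by fastforce

lemma jacobi_unique: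
  assumes "\<And>n. jacobi c x n = jacobi c y n" "x s = y s" "x (s + 1) = y (s + 1)"
  shows "x = y"
proof
  fix n
  have "(\<lambda>n. x n - y n) n = 0"
    by (rule jacobi_kernel_zero[of c _ s]) (use assms in \<open>simp_all add: jacobi_diff\<close>)
  then show "x n = y n" by simp
qed

definition wronskian :: "(int \<Rightarrow> complex) \<Rightarrow> (int \<Rightarrow> complex) \<Rightarrow> int \<Rightarrow> complex" where
  "wronskian u v n = u n * v (n + 1) - u (n + 1) * v n"

lemma wronskian_const:
  assumes u: "\<And>n. jacobi c u n = 0" and v: "\<And>n. jacobi c v n = 0"
  shows "wronskian u v n = wronskian u v m"
proof -
  have step: "wronskian u v (i + 1) = wronskian u v i" for i
  proof -
    have "u (i + 1 + 1) + u i + c (i + 1) * u (i + 1) = 0" "v (i + 1 + 1) + v i + c (i + 1) * v (i + 1) = 0"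
      using u[of "i + 1"] v[of "i + 1"] unfolding jacobi_def by simp_all
    then have "u (i + 1 + 1) = - u i - c (i + 1) * u (i + 1)" "v (i + 1 + 1) = - v i - c (i + 1) * v (i + 1)"
      by algebra+
    then show ?thesis unfolding wronskian_def by (simp only:) (simp add: algebra_simps)
  qed
  show ?thesis
    by (induction n rule: int_induct[where k = m]) (use step[symmetric] step[of "_ - 1"] in simp_all)
qed

lemma jacobi_solution_growth:
  assumes sol: "\<And>n. jacobi c h n = 0" and M: "\<And>n. norm (c n) \<le> M"
    and h0: "norm (h s) \<le> 1" "norm (h (s + 1)) \<le> 1"
  shows "norm (h (s + int r)) \<le> (2 + M) ^ r"
proof -
  have M0: "0 \<le> M" using M[of 0] norm_ge_zero[of "c 0"] by linarith
  have "norm (h (s + int r)) \<le> (2 + M) ^ r \<and> norm (h (s + int r + 1)) \<le> (2 + M) ^ r"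
  proof (induction r)
    case (Suc r)
    let ?n = "s + int r"
    have "h (?n + 1 + 1) = - h ?n - c (?n + 1) * h (?n + 1)"
      using sol[of "?n + 1"] unfolding jacobi_def by (simp add: eq_neg_iff_add_eq_0 algebra_simps)
    then have "norm (h (?n + 1 + 1)) \<le> norm (h ?n) + norm (c (?n + 1)) * norm (h (?n + 1))"
      by (metis norm_minus_cancel norm_mult norm_triangle_ineq4)
    also have "\<dots> \<le> (2 + M) ^ r + M * (2 + M) ^ r"
      using Suc M[of "?n + 1"] M0 by (intro add_mono mult_mono) auto
    also have "\<dots> \<le> (2 + M) ^ Suc r" using M0 by (simp add: algebra_simps)
    finally have "norm (h (?n + 1 + 1)) \<le> (2 + M) ^ Suc r" .
    moreover have "(2 + M) ^ r \<le> (2 + M) ^ Suc r" by (rule power_increasing) (use M0 in auto)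
    then have "norm (h (?n + 1)) \<le> (2 + M) ^ Suc r" using Suc by linarith
    moreover have "s + int (Suc r) = ?n + 1" by simp
    ultimately show ?case by (simp only:)
  qed (use h0 in simp)
  then show ?thesis by blast
qed

text \<open>In norms: \<open>\<parallel>x\<parallel>\<^sub>p \<le> C\<^sup>1\<^sup>/\<^sup>p \<parallel>jacobi c x\<parallel>\<^sub>p\<close> (\<open>C\<close> for \<open>p = \<infinity>\<close>) for every finitely supported \<open>x\<close>,
  since \<open>jacobi c x\<close> is supported in \<open>{a - 1..b + 1}\<close> when \<open>x\<close> is supported in \<open>{a..b}\<close>.\<close>

definition sections_bounded_below :: "ereal \<Rightarrow> (int \<Rightarrow> complex) \<Rightarrow> real \<Rightarrow> bool" where
  "sections_bounded_below p c C \<longleftrightarrow> (\<forall>x a b. (\<forall>n. n < a \<or> b < n \<longrightarrow> x n = 0) \<longrightarrow>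
       lp_mass p x {a..b} \<le> C * lp_mass p (jacobi c x) {a - 1..b + 1})"

lemma sections_bounded_belowD:
  assumes "sections_bounded_below p c C" "\<And>n. n < a \<or> b < n \<Longrightarrow> x n = 0"
  shows "lp_mass p x {a..b} \<le> C * lp_mass p (jacobi c x) {a - 1..b + 1}"
  using assms unfolding sections_bounded_below_def by blast

lemma lp_mass_reflect:
  fixes a b :: int
  shows "lp_mass p (\<lambda>n. x (- n)) {a..b} = lp_mass p x {- b..- a}"
proof -
  have "uminus ` {a..b} = {- b..- a}" by (auto simp: image_iff intro!: bexI[of _ "- _"])
  then show ?thesis using lp_mass_reindex[of uminus "{a..b}" p x] by (simp add: inj_on_def)
qed

lemma sections_bounded_below_reflect:
  assumes "sections_bounded_below p c C"
  shows "sections_bounded_below p (\<lambda>n. c (- n)) C"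
  unfolding sections_bounded_below_def
proof (intro allI impI)
  fix x :: "int \<Rightarrow> complex" and a b
  assume supp: "\<forall>n. n < a \<or> b < n \<longrightarrow> x n = 0"
  define x' where "x' n = x (- n)" for n
  have "\<forall>n. n < - b \<or> - a < n \<longrightarrow> x' n = 0" using supp unfolding x'_def by auto
  then have "lp_mass p x' {- b..- a} \<le> C * lp_mass p (jacobi c x') {- b - 1..- a + 1}"
    using assms unfolding sections_bounded_below_def by (metis diff_minus_eq_add uminus_add_conv_diff)
  moreover have "jacobi (\<lambda>n. c (- n)) x = (\<lambda>n. jacobi c x' (- n))"
    using jacobi_reflect[of c x'] unfolding x'_def by (simp add: fun_eq_iff)
  ultimately show "lp_mass p x {a..b} \<le> C * lp_mass p (jacobi (\<lambda>n. c (- n)) x) {a - 1..b + 1}"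
    using lp_mass_reflect[of p x' a b] lp_mass_reflect[of p "jacobi c x'" "a - 1" "b + 1"]
    unfolding x'_def by simp
qed

lemma wronskian_eq_0_imp_multiple:
  assumes u: "\<And>n. jacobi c u n = 0" "u \<noteq> (\<lambda>_. 0)" and v: "\<And>n. jacobi c v n = 0"
    and W: "wronskian u v 0 = 0"
  obtains s where "v = (\<lambda>n. s * u n)"
proof -
  have data: "u 0 \<noteq> 0 \<or> u 1 \<noteq> 0"
    using jacobi_kernel_zero[OF u(1), of 0] u(2) by auto
  obtain s where "v 0 = s * u 0" "v 1 = s * u 1"
  proof (cases "u 0 = 0")
    case True
    then show ?thesis using that[of "v 1 / u 1"] data W by (simp add: wronskian_def)
  next
    case False
    then show ?thesis using that[of "v 0 / u 0"] W by (simp add: wronskian_def field_simps)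
  qed
  then have "v = (\<lambda>n. s * u n)"
    by (intro jacobi_unique[of c _ _ 0]) (simp_all add: u v jacobi_scale)
  then show ?thesis by (rule that)
qed

lemma wronskian_basis:
  assumes u: "\<And>n. jacobi c u n = 0" and v: "\<And>n. jacobi c v n = 0" and W: "wronskian u v 0 \<noteq> 0"
    and w: "\<And>n. jacobi c w n = 0"
  obtains a b where "w = (\<lambda>n. a * u n + b * v n)"
proof -
  define a where "a = wronskian w v 0 / wronskian u v 0"
  define b where "b = wronskian u w 0 / wronskian u v 0"
  have ab: "a * u i + b * v i = (wronskian w v 0 * u i + wronskian u w 0 * v i) / wronskian u v 0" for i
    unfolding a_def b_def by (simp add: add_divide_distrib)
  have "wronskian w v 0 * u 0 + wronskian u w 0 * v 0 = w 0 * wronskian u v 0"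
    "wronskian w v 0 * u 1 + wronskian u w 0 * v 1 = w 1 * wronskian u v 0"
    unfolding wronskian_def by (simp_all add: algebra_simps)
  then have "w 0 = a * u 0 + b * v 0" "w 1 = a * u 1 + b * v 1" using W by (simp_all add: ab)
  then have "w = (\<lambda>n. a * u n + b * v n)"
    by (intro jacobi_unique[of c _ _ 0]) (simp_all add: u v w jacobi_add jacobi_scale)
  then show ?thesis by (rule that)
qed

lemma jacobi_solution_with_tails:
  assumes u: "\<And>n. jacobi c u n = 0" and v: "\<And>n. jacobi c v n = 0" and W: "wronskian u v 0 \<noteq> 0"
    and f: "\<And>n. k < \<bar>n\<bar> \<Longrightarrow> f n = 0"
  obtains x a b where "\<And>n. jacobi c x n = f n" "\<And>n. n \<le> - k \<Longrightarrow> x n = a * u n"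
    "\<And>n. k + 1 \<le> n \<Longrightarrow> x n = b * v n"
proof -
  obtain z where z: "\<And>n. jacobi c z n = f n" "z (- k - 1) = 0" "z (- k - 1 + 1) = 0"
    using jacobi_solution_exists[of c f "- k - 1" 0 0] by auto
  have z_left: "z n = 0" if "n \<le> - k" for n
    by (rule jacobi_zero_left[of "- k - 1" c z n]) (use z f that in auto)
  obtain w where w: "\<And>n. jacobi c w n = 0" "w (k + 1) = z (k + 1)" "w (k + 1 + 1) = z (k + 1 + 1)"
    using jacobi_solution_exists[of c "\<lambda>_. 0" "k + 1" "z (k + 1)" "z (k + 1 + 1)"] by auto
  have z_right: "z n = w n" if "k + 1 \<le> n" for n
    using jacobi_zero_right[of "k + 1" c "\<lambda>n. z n - w n" n] z(1) w f that by (simp add: jacobi_diff)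
  obtain a b where ab: "w = (\<lambda>n. a * u n + b * v n)" by (rule wronskian_basis[OF u v W w(1)])
  show ?thesis
  proof (rule that[of "\<lambda>n. z n - a * u n" "- a" b])
    show "jacobi c (\<lambda>n. z n - a * u n) n = f n" for n by (simp add: jacobi_diff jacobi_scale z u)
  qed (simp_all add: z_left z_right ab)
qed

lemma jacobi_truncate:
  assumes x: "\<And>n. jacobi c x n = f n" and f: "\<And>n. K \<le> \<bar>n\<bar> \<Longrightarrow> f n = 0"
    and small: "\<And>n. K - 1 \<le> \<bar>n\<bar> \<Longrightarrow> norm (x n) \<le> \<delta>" and K: "1 \<le> K"
  defines "xK \<equiv> \<lambda>n. if \<bar>n\<bar> \<le> K then x n else 0"
  shows "norm (jacobi c xK n - f n) \<le> \<delta>"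
    and "n \<notin> {- K - 1, - K, K, K + 1} \<Longrightarrow> jacobi c xK n = f n"
proof -
  have \<delta>: "0 \<le> \<delta>" using small[of K] K by (smt (verit) norm_ge_zero)
  consider "\<bar>n\<bar> \<le> K - 1" | "K + 2 \<le> \<bar>n\<bar>" | "n \<in> {- K - 1, - K, K, K + 1}" by force
  then have "jacobi c xK n = f n \<or> (n \<in> {- K - 1, - K, K, K + 1} \<and> norm (jacobi c xK n - f n) \<le> \<delta>)"
  proof cases
    case 1
    then show ?thesis using x[of n] unfolding jacobi_def xK_def by auto
  next
    case 2
    then show ?thesis using f[of n] unfolding jacobi_def xK_def by auto
  next
    case 3
    have "jacobi c xK (- K - 1) - f (- K - 1) = x (- K)"
      "jacobi c xK (- K) - f (- K) = - x (- K - 1)"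
      "jacobi c xK K - f K = - x (K + 1)"
      "jacobi c xK (K + 1) - f (K + 1) = x K"
      using x[of "- K"] x[of K] f[of "- K - 1"] f[of "- K"] f[of K] f[of "K + 1"] K
      unfolding jacobi_def xK_def by (auto simp: algebra_simps eq_neg_iff_add_eq_0)
    then show ?thesis using 3 small[of "- K"] small[of "- K - 1"] small[of K] small[of "K + 1"] by auto
  qed
  then show "norm (jacobi c xK n - f n) \<le> \<delta>" and "n \<notin> {- K - 1, - K, K, K + 1} \<Longrightarrow> jacobi c xK n = f n"
    using \<delta> by auto
qed

lemma bounded_if_bounded_tails:
  fixes f :: "int \<Rightarrow> complex"
  assumes "\<And>n. Nr \<le> n \<Longrightarrow> norm (f n) \<le> Br" "\<And>n. n \<le> Nl \<Longrightarrow> norm (f n) \<le> Bl"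
  shows "\<exists>B. \<forall>n. norm (f n) \<le> B"
proof (intro exI allI)
  fix n
  let ?B = "max Br (max Bl (Max (insert 0 ((\<lambda>n. norm (f n)) ` {Nl..Nr}))))"
  show "norm (f n) \<le> ?B"
  proof (cases "Nr \<le> n \<or> n \<le> Nl")
    case True then show ?thesis using assms[of n] by (auto simp: le_max_iff_disj)
  next
    case False
    then have "norm (f n) \<le> Max (insert 0 ((\<lambda>n. norm (f n)) ` {Nl..Nr}))" by (intro Max_ge) auto
    then show ?thesis by (simp add: le_max_iff_disj)
  qed
qed

lemma lp_mass_jacobi_truncate_residual_le:
  assumes "1 \<le> p" "finite S" and x: "\<And>n. jacobi c x n = f n" and f: "\<And>n. K \<le> \<bar>n\<bar> \<Longrightarrow> f n = 0"
    and small: "\<And>n. K - 1 \<le> \<bar>n\<bar> \<Longrightarrow> norm (x n) \<le> 1 / 4" and K: "1 \<le> K"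
  shows "lp_mass p (\<lambda>n. jacobi c (\<lambda>n. if \<bar>n\<bar> \<le> K then x n else 0) n - f n) S \<le> 1"
proof -
  let ?r = "\<lambda>n. jacobi c (\<lambda>n. if \<bar>n\<bar> \<le> K then x n else 0) n - f n"
  let ?W = "{- K - 1, - K, K, K + 1}"
  have "lp_mass p ?r S \<le> lp_mass p ?r ?W"
    by (rule lp_mass_le_support) (use assms(2) jacobi_truncate(2)[OF x f small K] in auto)
  also have "\<dots> \<le> real (card ?W) * (1 / 4) powr lp_exponent p"
    by (rule lp_mass_le_card[OF _ assms(1)]) (use jacobi_truncate(1)[OF x f small K] in auto)
  also have "\<dots> \<le> 4 * (1 / 4)"
  proof (rule mult_mono)
    show "real (card ?W) \<le> 4" using card_length[of "[- K - 1, - K, K, K + 1]"] by simp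
    show "(1 / 4 :: real) powr lp_exponent p \<le> 1 / 4"
      using powr_mono'[of 1 "lp_exponent p" "1 / 4 :: real"] lp_exponent_ge_1[OF assms(1)] by simp
  qed auto
  finally show ?thesis by simp
qed

section \<open>The block halving estimate\<close>

definition block :: "int \<Rightarrow> int \<Rightarrow> int set" where
  "block L j = {j * L ..< (j + 1) * L}"

lemma finite_block [simp]: "finite (block L j)"
  unfolding block_def by simp

lemma card_block: "0 \<le> L \<Longrightarrow> card (block L j) = nat L"
  unfolding block_def by (simp add: algebra_simps)

lemma mem_block_div: "0 < L \<Longrightarrow> n \<in> block L (n div L)"
proof -
  assume L: "0 < L"
  have "n div L * L + n mod L = n" "0 \<le> n mod L" "n mod L < L" using L by simp_all
  then have "n div L * L \<le> n" "n < n div L * L + L" by linarith+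
  then show ?thesis unfolding block_def by (simp add: algebra_simps)
qed

lemma jacobi_mult:
  "jacobi c (\<lambda>n. g n * \<psi> n) n
     = g n * jacobi c \<psi> n + (g (n + 1) - g n) * \<psi> (n + 1) + (g (n - 1) - g n) * \<psi> (n - 1)"
  unfolding jacobi_def by (simp add: algebra_simps)

lemma lp_mass_shift_le:
  fixes \<psi> :: "int \<Rightarrow> complex"
  assumes "finite S" "finite W" "\<And>n. n \<notin> W \<Longrightarrow> \<psi> n = 0"
  shows "lp_mass p (\<lambda>n. \<psi> (n + k)) S \<le> lp_mass p \<psi> W"
proof -
  have "lp_mass p (\<lambda>n. \<psi> (n + k)) S = lp_mass p \<psi> ((\<lambda>n. n + k) ` S)"
    by (rule lp_mass_reindex) (auto simp: inj_on_def)
  also have "\<dots> \<le> lp_mass p \<psi> W" by (rule lp_mass_le_support) (use assms in auto)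
  finally show ?thesis .
qed

lemma norm_jacobi_cutoff_le:
  fixes g :: "int \<Rightarrow> real"
  assumes g: "\<And>n. \<bar>g (n + 1) - g n\<bar> \<le> \<delta>" and sol: "g n * jacobi c \<psi> n = 0"
  shows "norm (jacobi c (\<lambda>n. of_real (g n) * \<psi> n) n) \<le> \<delta> * (norm (\<psi> (n + 1)) + norm (\<psi> (n - 1)))"
proof -
  have "jacobi c (\<lambda>n. of_real (g n) * \<psi> n) n
      = of_real (g (n + 1) - g n) * \<psi> (n + 1) + of_real (g (n - 1) - g n) * \<psi> (n - 1)"
    using jacobi_mult[of c "\<lambda>n. of_real (g n)" \<psi> n] sol by simp
  then have "norm (jacobi c (\<lambda>n. of_real (g n) * \<psi> n) n)
      \<le> \<bar>g (n + 1) - g n\<bar> * norm (\<psi> (n + 1)) + \<bar>g (n - 1) - g n\<bar> * norm (\<psi> (n - 1))"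
    using norm_triangle_ineq[of "of_real (g (n + 1) - g n) * \<psi> (n + 1)" "of_real (g (n - 1) - g n) * \<psi> (n - 1)"]
    by (simp only: norm_mult norm_of_real)
  also have "\<dots> \<le> \<delta> * norm (\<psi> (n + 1)) + \<delta> * norm (\<psi> (n - 1))"
    using g[of n] g[of "n - 1"] by (intro add_mono mult_right_mono) auto
  finally show ?thesis by (simp add: distrib_left)
qed

lemma lp_mass_jacobi_cutoff_le:
  fixes g :: "int \<Rightarrow> real"
  assumes "finite S" "finite W" "1 \<le> p" and supp: "\<And>n. n \<notin> W \<Longrightarrow> \<psi> n = 0"
    and g: "\<And>n. \<bar>g (n + 1) - g n\<bar> \<le> \<delta>" and sol: "\<And>n. g n * jacobi c \<psi> n = 0"
  shows "lp_mass p (jacobi c (\<lambda>n. of_real (g n) * \<psi> n)) S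
           \<le> (2 * \<delta>) powr lp_exponent p * (2 * lp_mass p \<psi> W)"
proof -
  let ?e = "lp_exponent p"
  have \<delta>: "0 \<le> \<delta>" using g[of 0] by linarith
  define y :: "int \<Rightarrow> complex" where "y n = of_real (norm (\<psi> (n + 1))) + of_real (norm (\<psi> (n + - 1)))" for n
  have "lp_mass p y S \<le> 2 powr ?e * (lp_mass p (\<lambda>n. \<psi> (n + 1)) S + lp_mass p (\<lambda>n. \<psi> (n + - 1)) S)"
    using lp_mass_add_le[OF assms(1,3), of "\<lambda>n. norm (\<psi> (n + 1))" "\<lambda>n. norm (\<psi> (n + - 1))"]
      lp_mass_cong[of S y "\<lambda>n. of_real (norm (\<psi> (n + 1))) + of_real (norm (\<psi> (n + - 1)))" p]
      lp_mass_cong[of S "\<lambda>n. of_real (norm (\<psi> (n + 1)))" "\<lambda>n. \<psi> (n + 1)" p]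
      lp_mass_cong[of S "\<lambda>n. of_real (norm (\<psi> (n + - 1)))" "\<lambda>n. \<psi> (n + - 1)" p]
    by (simp add: y_def)
  also have "\<dots> \<le> 2 powr ?e * (lp_mass p \<psi> W + lp_mass p \<psi> W)"
    using lp_mass_shift_le[where \<psi> = \<psi> and p = p and k = 1, OF assms(1,2) supp]
      lp_mass_shift_le[where \<psi> = \<psi> and p = p and k = "- 1", OF assms(1,2) supp]
    by (intro mult_left_mono add_mono) auto
  finally have y: "lp_mass p y S \<le> 2 powr ?e * (lp_mass p \<psi> W + lp_mass p \<psi> W)" .
  have "lp_mass p (jacobi c (\<lambda>n. of_real (g n) * \<psi> n)) S \<le> lp_mass p (\<lambda>n. of_real \<delta> * y n) S"
  proof (rule lp_mass_mono[OF assms(1,3)])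
    show "norm (jacobi c (\<lambda>n. of_real (g n) * \<psi> n) n) \<le> norm (of_real \<delta> * y n)" for n
      using norm_jacobi_cutoff_le[OF g sol, of n] \<delta> unfolding y_def norm_mult
      by (simp add: of_real_add[symmetric] del: of_real_add)
  qed
  also have "\<dots> = \<delta> powr ?e * lp_mass p y S"
    using lp_mass_scale[OF assms(1,3)] \<delta> by simp
  also have "\<dots> \<le> \<delta> powr ?e * (2 powr ?e * (lp_mass p \<psi> W + lp_mass p \<psi> W))"
    using y by (intro mult_left_mono) auto
  finally show ?thesis
    using \<delta> by (simp add: powr_mult mult_ac)
qed

definition tent :: "int \<Rightarrow> int \<Rightarrow> int \<Rightarrow> int" where
  "tent a L n = (if n < a then 0 else if n < a + L then n - a else if n < a + 2 * L then L
                 else if n < a + 3 * L then a + 3 * L - 1 - n else 0)"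

lemma tent_increment: "1 \<le> L \<Longrightarrow> \<bar>tent a L (n + 1) - tent a L n\<bar> \<le> 1"
  unfolding tent_def by auto

lemma tent_eq_0: "1 \<le> L \<Longrightarrow> n \<le> a \<or> a + 3 * L - 1 \<le> n \<Longrightarrow> tent a L n = 0"
  unfolding tent_def by auto

lemma tent_plateau: "a + L \<le> n \<Longrightarrow> n < a + 2 * L \<Longrightarrow> tent a L n = L"
  unfolding tent_def by auto

lemma lp_mass_jacobi_tent_cutoff_le:
  assumes p: "1 \<le> p" and L: "2 \<le> L" and "finite S"
    and sol: "\<And>n. n \<in> {a ..< a + 3 * L} \<Longrightarrow> jacobi c \<phi> n = 0"
  shows "lp_mass p (jacobi c (\<lambda>n. of_real (tent a L n / L) * \<phi> n)) S
           \<le> 2 / L * (2 * lp_mass p \<phi> {a ..< a + 3 * L})"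
proof -
  define W where "W = {a ..< a + 3 * L}"
  define \<psi> where "\<psi> n = (if n \<in> W then \<phi> n else 0)" for n
  define g where "g n = real_of_int (tent a L n) / real_of_int L" for n
  have Lpos: "0 < real_of_int L" using L by simp
  have g0: "g n = 0" if "n \<le> a \<or> a + 3 * L - 1 \<le> n" for n
    using that L unfolding g_def by (simp add: tent_eq_0)
  have "(\<lambda>n. of_real (tent a L n / L) * \<phi> n) = (\<lambda>n. of_real (g n) * \<psi> n)"
    using g0 unfolding g_def \<psi>_def W_def by (force simp: fun_eq_iff)
  then have "lp_mass p (jacobi c (\<lambda>n. of_real (tent a L n / L) * \<phi> n)) S
      = lp_mass p (jacobi c (\<lambda>n. of_real (g n) * \<psi> n)) S" by simp
  also have "\<dots> \<le> (2 * (1 / real_of_int L)) powr lp_exponent p * (2 * lp_mass p \<psi> W)"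
  proof (rule lp_mass_jacobi_cutoff_le)
    show "\<bar>g (n + 1) - g n\<bar> \<le> 1 / real_of_int L" for n
    proof -
      have "\<bar>real_of_int (tent a L (n + 1) - tent a L n)\<bar> \<le> 1"
        using tent_increment[of L a n] L by linarith
      then show ?thesis
        using Lpos unfolding g_def diff_divide_distrib[symmetric] abs_divide by (simp add: divide_right_mono)
    qed
    show "g n * jacobi c \<psi> n = 0" for n
    proof (cases "n \<le> a \<or> a + 3 * L - 1 \<le> n")
      case False
      then have "jacobi c \<psi> n = jacobi c \<phi> n" "n \<in> W"
        unfolding jacobi_def \<psi>_def W_def by auto
      then show ?thesis using sol unfolding W_def by simp
    qed (simp add: g0)
  qed (use p \<open>finite S\<close> in \<open>auto simp: W_def \<psi>_def\<close>)
  also have "\<dots> \<le> 2 / real_of_int L * (2 * lp_mass p \<psi> W)"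
  proof (rule mult_right_mono)
    show "(2 * (1 / real_of_int L)) powr lp_exponent p \<le> 2 / real_of_int L"
      using powr_mono'[of 1 "lp_exponent p" "2 / real_of_int L"] lp_exponent_ge_1[OF p] L by simp
  qed (simp add: W_def lp_mass_nonneg)
  also have "lp_mass p \<psi> W = lp_mass p \<phi> W" by (rule lp_mass_cong) (simp add: \<psi>_def)
  finally show ?thesis unfolding W_def .
qed

text \<open>Testing the lower bound against \<open>\<phi>\<close> cut off by a tent of slope \<open>1/L\<close> over three blocks:
  the middle block mass is at most \<open>4C/L\<close> times the total mass of the three blocks.\<close>

lemma block_mass_halving:
  assumes p: "1 \<le> p" and sections: "sections_bounded_below p c C" and C: "0 \<le> C"
    and L: "2 \<le> L" "24 * C \<le> real_of_int L"
    and sol: "\<And>n. n \<in> {(j - 1) * L ..< (j + 2) * L} \<Longrightarrow> jacobi c \<phi> n = 0"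
  shows "lp_mass p \<phi> (block L j)
           \<le> max (lp_mass p \<phi> (block L (j - 1))) (lp_mass p \<phi> (block L (j + 1))) / 2"
proof -
  define a where "a = (j - 1) * L"
  define x where "x n = of_real (tent a L n / L) * \<phi> n" for n
  define m0 where "m0 = lp_mass p \<phi> (block L (j - 1))"
  define m1 where "m1 = lp_mass p \<phi> (block L j)"
  define m2 where "m2 = lp_mass p \<phi> (block L (j + 1))"
  have Lpos: "0 < real_of_int L" using L by simp
  have blocks: "block L (j - 1) = {a ..< a + L}" "block L j = {a + L ..< a + 2 * L}"
    "block L (j + 1) = {a + 2 * L ..< a + 3 * L}"
    unfolding block_def a_def by (auto simp: algebra_simps)
  have "m1 = lp_mass p x (block L j)"
    unfolding m1_def by (rule lp_mass_cong) (use Lpos in \<open>auto simp: blocks x_def tent_plateau\<close>)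
  also have "\<dots> \<le> lp_mass p x {a .. a + 3 * L - 1}"
    by (rule lp_mass_subset) (auto simp: blocks)
  also have "\<dots> \<le> C * lp_mass p (jacobi c x) {a - 1 .. a + 3 * L - 1 + 1}"
  proof (rule sections_bounded_belowD[OF sections])
    show "x n = 0" if "n < a \<or> a + 3 * L - 1 < n" for n
      using tent_eq_0[of L n a] that L unfolding x_def by auto
  qed
  finally have "m1 \<le> C * lp_mass p (jacobi c x) {a - 1 .. a + 3 * L - 1 + 1}" .
  moreover have "lp_mass p (jacobi c x) {a - 1 .. a + 3 * L - 1 + 1} \<le> 2 / L * (2 * lp_mass p \<phi> {a ..< a + 3 * L})"
    unfolding x_def by (rule lp_mass_jacobi_tent_cutoff_le[OF p L(1)]) (use sol in \<open>simp_all add: a_def algebra_simps\<close>)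
  moreover have "lp_mass p \<phi> {a ..< a + 3 * L} \<le> m0 + m1 + m2"
  proof -
    have "{a ..< a + 3 * L} = (block L (j - 1) \<union> block L j) \<union> block L (j + 1)" unfolding blocks by auto
    then show ?thesis
      unfolding m0_def m1_def m2_def
      using lp_mass_union_le[of "block L (j - 1) \<union> block L j" "block L (j + 1)" p \<phi>]
        lp_mass_union_le[of "block L (j - 1)" "block L j" p \<phi>] by simp
  qed
  ultimately have "m1 \<le> C * (2 / L * (2 * (m0 + m1 + m2)))"
    using C Lpos by (smt (verit) mult_left_mono divide_nonneg_pos)
  also have "\<dots> = (4 * C / L) * (m0 + m1 + m2)" by (simp add: field_simps)
  also have "\<dots> \<le> (1 / 6) * (m0 + m1 + m2)"
    using L Lpos unfolding m0_def m1_def m2_def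
    by (intro mult_right_mono add_nonneg_nonneg lp_mass_nonneg) (auto simp: field_simps)
  finally have "6 * m1 \<le> m0 + m1 + m2" by simp
  moreover have "m0 \<le> max m0 m2" "m2 \<le> max m0 m2" "0 \<le> m0" unfolding m0_def by (auto intro: lp_mass_nonneg)
  ultimately show ?thesis unfolding m0_def[symmetric] m1_def[symmetric] m2_def[symmetric] by linarith
qed

definition halving_at :: "(int \<Rightarrow> real) \<Rightarrow> int \<Rightarrow> bool" where
  "halving_at m i \<longleftrightarrow> m i \<le> max (m (i - 1)) (m (i + 1)) / 2"

lemma halving_at_doubles:
  assumes "halving_at m i" "m (i - 1) \<le> m i" "0 < m i"
  shows "2 * m i \<le> m (i + 1)"
  using assms unfolding halving_at_def max_def by (auto split: if_splits)

lemma halving_growth_right: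
  assumes halving: "\<And>i. j < i \<Longrightarrow> i \<le> j + int k \<Longrightarrow> halving_at m i"
    and "m j \<le> m (j + 1)" and pos: "0 < m (j + 1)"
  shows "2 ^ k * m (j + 1) \<le> m (j + 1 + int k)"
proof -
  have "m (j + int k') \<le> m (j + 1 + int k') \<and> 2 ^ k' * m (j + 1) \<le> m (j + 1 + int k')"
    if "k' \<le> k" for k'
    using that
  proof (induction k')
    case (Suc k')
    define i where "i = j + 1 + int k'"
    have IH: "m (i - 1) \<le> m i" "2 ^ k' * m (j + 1) \<le> m i"
      using Suc unfolding i_def by (auto simp: algebra_simps)
    moreover have "0 < m i" using IH(2) pos by (smt (verit) zero_less_power mult_pos_pos)
    moreover have "halving_at m i" using halving Suc unfolding i_def by auto
    ultimately have "2 * m i \<le> m (i + 1)" "0 < m i" by (auto intro: halving_at_doubles)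
    then have "m i \<le> m (i + 1)" "2 * (2 ^ k' * m (j + 1)) \<le> m (i + 1)" using IH(2) by linarith+
    moreover have eq: "j + int (Suc k') = i" "j + 1 + int (Suc k') = i + 1" unfolding i_def by simp_all
    ultimately show ?case unfolding eq by (simp add: mult.assoc)
  qed (use assms(2) in simp)
  then show ?thesis by simp
qed

lemma halving_growth_left:
  assumes halving: "\<And>i. j - int k \<le> i \<Longrightarrow> i < j \<Longrightarrow> halving_at m i"
    and "m j \<le> m (j - 1)" and "0 < m (j - 1)"
  shows "2 ^ k * m (j - 1) \<le> m (j - 1 - int k)"
proof -
  define m' where "m' i = m (- i)" for i
  have "halving_at m' i" if "- j < i" "i \<le> - j + int k" for i
    using halving[of "- i"] that unfolding halving_at_def m'_def by (simp add: max.commute)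
  then have "2 ^ k * m' (- j + 1) \<le> m' (- j + 1 + int k)"
    by (rule halving_growth_right) (use assms(2,3) in \<open>auto simp: m'_def\<close>)
  then show ?thesis unfolding m'_def by (simp add: algebra_simps)
qed

lemma halving_interior_bound:
  assumes j: "J1 \<le> j" "j \<le> J2"
    and halving: "\<And>i. J1 \<le> i \<Longrightarrow> i \<le> J2 \<Longrightarrow> halving_at m i"
    and nonneg: "\<And>i. 0 \<le> m i" and K: "m (J1 - 1) \<le> K" "m (J2 + 1) \<le> K"
  shows "2 ^ nat (min (j - J1) (J2 - j)) * m j \<le> K"
proof (cases "m j = 0")
  case True then show ?thesis using K nonneg[of "J1 - 1"] by simp
next
  case False
  then have pos: "0 < m j" using nonneg[of j] by simp
  have dist: "(2::real) ^ nat (min (j - J1) (J2 - j)) * m j \<le> 2 ^ nat (j - J1) * m j"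
    "(2::real) ^ nat (min (j - J1) (J2 - j)) * m j \<le> 2 ^ nat (J2 - j) * m j"
    using pos by (intro mult_right_mono power_increasing; auto)+
  have "m j \<le> max (m (j - 1)) (m (j + 1)) / 2" using halving j unfolding halving_at_def by auto
  then consider "2 * m j \<le> m (j + 1)" | "2 * m j \<le> m (j - 1)" by (auto simp: max_def split: if_splits)
  then show ?thesis
  proof cases
    case 1
    define k where "k = nat (J2 - j)"
    have "2 ^ k * m (j + 1) \<le> m (j + 1 + int k)"
      by (rule halving_growth_right) (use halving j 1 pos in \<open>auto simp: k_def\<close>)
    also have "j + 1 + int k = J2 + 1" using j unfolding k_def by simp
    finally have "2 ^ k * m (j + 1) \<le> K" using K by simp
    moreover have "2 ^ k * m j \<le> 2 ^ k * m (j + 1)" using 1 pos by (intro mult_left_mono) auto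
    ultimately show ?thesis using dist(2) unfolding k_def by linarith
  next
    case 2
    define k where "k = nat (j - J1)"
    have "2 ^ k * m (j - 1) \<le> m (j - 1 - int k)"
      by (rule halving_growth_left) (use halving j 2 pos in \<open>auto simp: k_def\<close>)
    also have "j - 1 - int k = J1 - 1" using j unfolding k_def by simp
    finally have "2 ^ k * m (j - 1) \<le> K" using K by simp
    moreover have "2 ^ k * m j \<le> 2 ^ k * m (j - 1)" using 2 pos by (intro mult_left_mono) auto
    ultimately show ?thesis using dist(1) unfolding k_def by linarith
  qed
qed

lemma halving_at_halves:
  assumes "halving_at m i" "m (i + 1) \<le> m i" "0 \<le> m (i - 1)"
  shows "m i \<le> m (i - 1) / 2"
  using assms unfolding halving_at_def max_def by (auto split: if_splits)

section \<open>Jacobi operators bounded below on finite sections are invertible\<close>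

definition kernel_sol :: "(int \<Rightarrow> complex) \<Rightarrow> complex \<times> complex \<Rightarrow> int \<Rightarrow> complex" where
  "kernel_sol c t n = fst t * jacobi_ivp c (\<lambda>_. 0) 1 0 n + snd t * jacobi_ivp c (\<lambda>_. 0) 0 1 n"

lemma jacobi_kernel_sol: "jacobi c (kernel_sol c t) n = 0"
  unfolding kernel_sol_def jacobi_add jacobi_scale jacobi_jacobi_ivp by simp

lemma kernel_sol_0: "kernel_sol c t 0 = fst t"
  and kernel_sol_1: "kernel_sol c t 1 = snd t"
  unfolding kernel_sol_def by (simp_all add: jacobi_ivp.simps)

lemma kernel_sol_eq:
  assumes "\<And>n. jacobi c h n = 0"
  shows "h = kernel_sol c (h 0, h 1)"
  by (rule jacobi_unique[of c _ _ 0]) (simp_all add: assms jacobi_kernel_sol kernel_sol_0 kernel_sol_1)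

lemma kernel_sol_scale: "kernel_sol c (r *\<^sub>R t) = (\<lambda>n. of_real r * kernel_sol c t n)"
  unfolding kernel_sol_def by (simp add: fun_eq_iff scaleR_conv_of_real algebra_simps)

lemma tendsto_kernel_sol: "((\<lambda>t. kernel_sol c t n) \<longlongrightarrow> kernel_sol c t n) (at t)"
  unfolding kernel_sol_def by (intro tendsto_intros)

locale jacobi_bounded_below =
  fixes p :: ereal and c :: "int \<Rightarrow> complex" and C M :: real and L :: int
  assumes p: "1 \<le> p" and sections: "sections_bounded_below p c C" and C: "0 \<le> C"
    and M: "\<And>n. norm (c n) \<le> M" and L: "2 \<le> L" and L_large: "24 * C \<le> real_of_int L"
begin

definition block_mass :: "(int \<Rightarrow> complex) \<Rightarrow> int \<Rightarrow> real" where
  "block_mass \<phi> j = lp_mass p \<phi> (block L j)"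

lemma M_nonneg: "0 \<le> M"
  using M[of 0] norm_ge_zero[of "c 0"] by linarith

lemma L_pos: "0 < L"
  using L by simp

lemma block_mass_nonneg: "0 \<le> block_mass \<phi> j"
  unfolding block_mass_def by (rule lp_mass_nonneg) simp

lemma halving_at_block_mass:
  assumes "\<And>n. n \<in> {(j - 1) * L ..< (j + 2) * L} \<Longrightarrow> jacobi c \<phi> n = 0"
  shows "halving_at (block_mass \<phi>) j"
  unfolding halving_at_def block_mass_def using block_mass_halving[OF p sections C L L_large assms] by simp

lemma halving_at_block_mass_solution: "(\<And>n. jacobi c \<phi> n = 0) \<Longrightarrow> halving_at (block_mass \<phi>) j"
  by (rule halving_at_block_mass) auto

lemma norm_le_if_block_mass_le:
  assumes "n \<in> block L j" "block_mass \<phi> j \<le> \<epsilon> powr lp_exponent p" "0 \<le> \<epsilon>"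
  shows "norm (\<phi> n) \<le> \<epsilon>"
proof -
  have "norm (\<phi> n) powr lp_exponent p \<le> block_mass \<phi> j"
    unfolding block_mass_def by (rule norm_powr_le_lp_mass) (simp_all add: assms(1))
  then show ?thesis
    by (rule le_of_powr_le_powr[OF lp_exponent_pos[OF p] norm_ge_zero assms(3) order_trans[OF _ assms(2)]])
qed

lemma block_mass_le:
  assumes "\<And>n. n \<in> block L j \<Longrightarrow> norm (\<phi> n) \<le> B" "0 \<le> B"
  shows "block_mass \<phi> j \<le> real_of_int L * B powr lp_exponent p"
  using lp_mass_le_card[OF _ p assms(2), of "block L j" \<phi>] assms(1) card_block[of L j] L
  unfolding block_mass_def by simp

lemma block_mass_scale: "block_mass (\<lambda>n. t * \<phi> n) j = norm t powr lp_exponent p * block_mass \<phi> j"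
  unfolding block_mass_def by (rule lp_mass_scale[OF _ p]) simp

lemma bounded_solution_eq_0:
  assumes sol: "\<And>n. jacobi c h n = 0" and B: "\<And>n. norm (h n) \<le> B"
  shows "h n = 0"
proof -
  have B0: "0 \<le> B" using B[of 0] norm_ge_zero[of "h 0"] by linarith
  define K where "K = real_of_int L * B powr lp_exponent p"
  have "block_mass h j = 0" for j
  proof (rule ccontr)
    assume "block_mass h j \<noteq> 0"
    then have pos: "0 < block_mass h j" using block_mass_nonneg[of h j] by simp
    obtain N :: nat where N: "K / block_mass h j < 2 ^ N" using real_arch_pow[of 2] by auto
    have "2 ^ nat (min (j - (j - int N)) (j + int N - j)) * block_mass h j \<le> K"
      unfolding K_def
      by (rule halving_interior_bound) (use halving_at_block_mass_solution[OF sol] block_mass_nonneg block_mass_le B B0 in auto)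
    then show False using N pos by (simp add: divide_less_eq mult.commute)
  qed
  then show ?thesis
    using norm_le_if_block_mass_le[OF mem_block_div[OF L_pos, of n], where \<phi> = h and \<epsilon> = 0] by simp
qed

lemma block_mass_solution_le:
  assumes "\<And>n. jacobi c h n = 0" "norm (h (j * L)) \<le> 1" "norm (h (j * L + 1)) \<le> 1"
  shows "block_mass h j \<le> real_of_int L * ((2 + M) ^ nat L) powr lp_exponent p"
proof (rule block_mass_le)
  fix n assume "n \<in> block L j"
  then have n: "n = j * L + int (nat (n - j * L))" "nat (n - j * L) \<le> nat L"
    unfolding block_def by (auto simp: algebra_simps)
  have "norm (h n) \<le> (2 + M) ^ nat (n - j * L)"
    using jacobi_solution_growth[OF assms(1) M assms(2,3)] n(1) by metis
  also have "\<dots> \<le> (2 + M) ^ nat L" by (rule power_increasing) (use n M_nonneg in auto)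
  finally show "norm (h n) \<le> (2 + M) ^ nat L" .
qed (use M_nonneg in simp)

lemma growing_solution_block_mass_le:
  assumes sol: "\<And>n. jacobi c h n = 0" and grows: "block_mass h j < block_mass h (j + 1)"
    and h: "norm (h ((j + 1 + int k) * L)) \<le> 1" "norm (h ((j + 1 + int k) * L + 1)) \<le> 1"
  shows "2 ^ k * block_mass h (j + 1) \<le> real_of_int L * ((2 + M) ^ nat L) powr lp_exponent p"
proof -
  have "2 ^ k * block_mass h (j + 1) \<le> block_mass h (j + 1 + int k)"
    using halving_at_block_mass_solution[OF sol] grows block_mass_nonneg[of h j]
    by (intro halving_growth_right) auto
  also have "\<dots> \<le> real_of_int L * ((2 + M) ^ nat L) powr lp_exponent p"
    by (rule block_mass_solution_le[OF sol h])
  finally show ?thesis .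
qed

lemma block_mass_grows_if_unit_grows:
  assumes unit_grows: "\<And>t. norm t = 1 \<Longrightarrow> block_mass (kernel_sol c t) j < block_mass (kernel_sol c t) (j + 1)"
    and sol: "\<And>n. jacobi c h n = 0" and nz: "(h 0, h 1) \<noteq> 0"
  shows "block_mass h j < block_mass h (j + 1)"
proof -
  define r where "r = norm (h 0, h 1)"
  define t where "t = inverse r *\<^sub>R (h 0, h 1)"
  have r: "0 < r" using nz by (simp add: r_def)
  have "h = kernel_sol c (r *\<^sub>R t)" using kernel_sol_eq[OF sol] r by (simp add: t_def)
  then have "block_mass h i = r powr lp_exponent p * block_mass (kernel_sol c t) i" for i
    using block_mass_scale[of "of_real r" "kernel_sol c t" i] r by (simp add: kernel_sol_scale)
  moreover have "norm t = 1" using r unfolding t_def norm_scaleR r_def[symmetric] by simp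
  ultimately show ?thesis using unit_grows r by simp
qed

text \<open>If every nonzero solution had more mass on block \<open>j + 1\<close> than on block \<open>j\<close>, the growth
  forced by halving would make every solution with data of size \<open>1\<close> far to the right small on
  block \<open>j\<close>; two such solutions would then have a small Wronskian, but it is constant \<open>-1\<close>.\<close>

lemma exists_kernel_sol_block_mass_le:
  "\<exists>t. norm t = 1 \<and> block_mass (kernel_sol c t) (j + 1) \<le> block_mass (kernel_sol c t) j"
proof (rule ccontr)
  let ?e = "lp_exponent p"
  define K0 where "K0 = real_of_int L * ((2 + M) ^ nat L) powr ?e"
  assume "\<nexists>t. norm t = 1 \<and> block_mass (kernel_sol c t) (j + 1) \<le> block_mass (kernel_sol c t) j"
  then have unit_grows: "block_mass (kernel_sol c t) j < block_mass (kernel_sol c t) (j + 1)" if "norm t = 1" for t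
    using that not_le by blast
  obtain k :: nat where k: "K0 / (1 / 4) powr ?e < 2 ^ k" using real_arch_pow[of 2] by auto
  define s where "s = (j + 1 + int k) * L"
  have small: "norm (h (j * L)) \<le> 1 / 4 \<and> norm (h (j * L + 1)) \<le> 1 / 4"
    if sol: "\<And>n. jacobi c h n = 0" and data: "(h s, h (s + 1)) \<in> {(0, 1), (1, 0)}" for h
  proof -
    have "(h 0, h 1) \<noteq> 0"
      using jacobi_kernel_zero[OF sol, of 0 s] jacobi_kernel_zero[OF sol, of 0 "s + 1"] data
      by (auto simp: zero_prod_def)
    then have g: "block_mass h j < block_mass h (j + 1)" using block_mass_grows_if_unit_grows[OF unit_grows sol] by blast
    have "2 ^ k * block_mass h (j + 1) \<le> K0"
      unfolding K0_def by (rule growing_solution_block_mass_le[OF sol g]) (use data in \<open>auto simp: s_def\<close>)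
    moreover have "K0 < 2 ^ k * (1 / 4) powr ?e" using k by (simp add: divide_less_eq mult.commute)
    ultimately have "2 ^ k * block_mass h (j + 1) < 2 ^ k * (1 / 4) powr ?e" by linarith
    then have bm: "block_mass h j \<le> (1 / 4) powr ?e" using g by simp
    have mem: "j * L \<in> block L j" "j * L + 1 \<in> block L j"
      unfolding block_def using L by (auto simp: algebra_simps)
    show ?thesis using norm_le_if_block_mass_le[OF mem(1) bm] norm_le_if_block_mass_le[OF mem(2) bm] by simp
  qed
  obtain h1 where h1: "\<And>n. jacobi c h1 n = 0" "h1 s = 0" "h1 (s + 1) = 1"
    using jacobi_solution_exists[of c "\<lambda>_. 0" s 0 1] by auto
  obtain h2 where h2: "\<And>n. jacobi c h2 n = 0" "h2 s = 1" "h2 (s + 1) = 0"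
    using jacobi_solution_exists[of c "\<lambda>_. 0" s 1 0] by auto
  have "wronskian h1 h2 (j * L) = wronskian h1 h2 s" by (rule wronskian_const[OF h1(1) h2(1)])
  also have "\<dots> = -1" unfolding wronskian_def using h1 h2 by simp
  finally have "1 = norm (h1 (j * L) * h2 (j * L + 1) - h1 (j * L + 1) * h2 (j * L))"
    unfolding wronskian_def by simp
  also have "\<dots> \<le> norm (h1 (j * L)) * norm (h2 (j * L + 1)) + norm (h1 (j * L + 1)) * norm (h2 (j * L))"
    by (metis norm_mult norm_triangle_ineq4)
  also have "\<dots> \<le> (1 / 4) * (1 / 4) + (1 / 4) * (1 / 4)"
    using small[OF h1(1)] small[OF h2(1)] h1 h2 by (intro add_mono mult_mono) auto
  finally show False by simp
qed

lemma isCont_block_mass_kernel_sol: "isCont (\<lambda>t. block_mass (kernel_sol c t) j) t"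
  unfolding isCont_def block_mass_def by (rule tendsto_lp_mass[OF _ p tendsto_kernel_sol]) simp

lemma decaying_if_block_mass_decaying:
  assumes "\<And>N. block_mass \<psi> (int N) \<le> B / 2 ^ N"
  shows "\<forall>\<epsilon>>0. \<exists>N. \<forall>n\<ge>N. norm (\<psi> n) \<le> \<epsilon>"
proof (intro allI impI)
  fix \<epsilon> :: real assume \<epsilon>: "\<epsilon> > 0"
  obtain N0 :: nat where N0: "B / \<epsilon> powr lp_exponent p < 2 ^ N0" using real_arch_pow[of 2] by auto
  have "norm (\<psi> n) \<le> \<epsilon>" if n: "n \<ge> int N0 * L" for n
  proof -
    have "int N0 * L div L \<le> n div L" by (rule zdiv_mono1[OF n L_pos])
    then have j: "n div L = int (nat (n div L))" "N0 \<le> nat (n div L)" using L_pos by auto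
    have "block_mass \<psi> (n div L) \<le> B / 2 ^ nat (n div L)" using assms[of "nat (n div L)"] j by simp
    also have "\<dots> \<le> B / 2 ^ N0"
      using j block_mass_nonneg[of \<psi> 0] assms[of 0] by (intro divide_left_mono power_increasing) auto
    also have "\<dots> \<le> \<epsilon> powr lp_exponent p"
      using N0 \<epsilon> by (simp add: divide_le_eq divide_less_eq mult.commute less_imp_le)
    finally show ?thesis using norm_le_if_block_mass_le[OF mem_block_div[OF L_pos]] \<epsilon> by simp
  qed
  then show "\<exists>N. \<forall>n\<ge>N. norm (\<psi> n) \<le> \<epsilon>" by blast
qed

lemma exists_kernel_sol_block_mass_nonincreasing:
  "\<exists>t. norm t = 1 \<and> (\<forall>N. block_mass (kernel_sol c t) (int N + 1) \<le> block_mass (kernel_sol c t) (int N))"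
proof -
  define m where "m t = block_mass (kernel_sol c t)" for t
  define K where "K N = {t. norm t = 1 \<and> m t (int N + 1) \<le> m t (int N)}" for N :: nat
  have "compact (K N)" for N
  proof -
    have cont: "continuous_on UNIV (\<lambda>t. m t i)" for i
      unfolding m_def by (intro continuous_at_imp_continuous_on ballI isCont_block_mass_kernel_sol)
    have "K N = sphere 0 1 \<inter> {t. m t (int N + 1) \<le> m t (int N)}" unfolding K_def by auto
    then show ?thesis by (simp add: compact_Int_closed closed_Collect_le[OF cont cont])
  qed
  moreover have "K N \<noteq> {}" for N
    using exists_kernel_sol_block_mass_le[of "int N"] unfolding K_def m_def by auto
  moreover have "K (Suc N) \<subseteq> K N" for N
  proof
    fix t assume "t \<in> K (Suc N)"
    then have "norm t = 1" "m t (int N + 1 + 1) \<le> m t (int N + 1)" unfolding K_def by (auto simp: ac_simps)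
    moreover have "halving_at (m t) (int N + 1)"
      unfolding m_def by (rule halving_at_block_mass_solution[OF jacobi_kernel_sol])
    ultimately have "m t (int N + 1) \<le> m t (int N) / 2"
      using halving_at_halves[of "m t" "int N + 1"] block_mass_nonneg unfolding m_def by simp
    then show "t \<in> K N"
      using \<open>norm t = 1\<close> block_mass_nonneg[of "kernel_sol c t" "int N"] unfolding K_def m_def by simp
  qed
  then have "K n \<subseteq> K m" if "m \<le> n" for m n
    using lift_Suc_antimono_le[of K] that by blast
  ultimately have "\<Inter> (range K) \<noteq> {}" by (rule compact_nest)
  then show ?thesis unfolding K_def m_def by blast
qed

lemma decaying_solution_right:
  "\<exists>\<psi>. (\<forall>n. jacobi c \<psi> n = 0) \<and> \<psi> \<noteq> (\<lambda>_. 0) \<and> (\<forall>\<epsilon>>0. \<exists>N. \<forall>n\<ge>N. norm (\<psi> n) \<le> \<epsilon>)"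
proof -
  obtain t where t: "norm t = 1"
    and mono: "\<And>N. block_mass (kernel_sol c t) (int N + 1) \<le> block_mass (kernel_sol c t) (int N)"
    using exists_kernel_sol_block_mass_nonincreasing by blast
  define \<psi> where "\<psi> = kernel_sol c t"
  have sol: "jacobi c \<psi> n = 0" for n unfolding \<psi>_def by (rule jacobi_kernel_sol)
  have halves: "block_mass \<psi> (int N + 1) \<le> block_mass \<psi> (int N) / 2" for N
  proof -
    have "block_mass \<psi> (int N + 1 + 1) \<le> block_mass \<psi> (int N + 1)"
      using mono[of "Suc N"] unfolding \<psi>_def by (simp add: ac_simps)
    then have "block_mass \<psi> (int N + 1) \<le> block_mass \<psi> (int N + 1 - 1) / 2"
      by (intro halving_at_halves halving_at_block_mass_solution[OF sol] block_mass_nonneg)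
    then show ?thesis by simp
  qed
  have "block_mass \<psi> (int N) \<le> block_mass \<psi> 0 / 2 ^ N" for N
  proof (induction N)
    case (Suc N)
    have "block_mass \<psi> (int (Suc N)) \<le> block_mass \<psi> (int N) / 2" using halves[of N] by (simp add: add.commute)
    also have "\<dots> \<le> block_mass \<psi> 0 / 2 ^ N / 2" using Suc by (simp add: divide_right_mono)
    also have "\<dots> = block_mass \<psi> 0 / 2 ^ Suc N" by (simp add: mult.commute)
    finally show ?case .
  qed simp
  then have "\<forall>\<epsilon>>0. \<exists>N. \<forall>n\<ge>N. norm (\<psi> n) \<le> \<epsilon>" by (rule decaying_if_block_mass_decaying)
  moreover have "\<psi> \<noteq> (\<lambda>_. 0)"
  proof
    assume "\<psi> = (\<lambda>_. 0)"
    then have "t = 0" using kernel_sol_0[of c t] kernel_sol_1[of c t] unfolding \<psi>_def by (simp add: prod_eq_iff)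
    then show False using t by simp
  qed
  ultimately show ?thesis using sol by blast
qed


lemma jacobi_maps_lp:
  assumes x: "x \<in> lp_space p"
  shows "jacobi c x \<in> lp_space p"
proof -
  have "jacobi c x = (\<lambda>n. (x (n + 1) + x (n + - 1)) + c n * x n)" unfolding jacobi_def by simp
  also have "\<dots> \<in> lp_space p"
    by (intro lp_space_add[OF p] lp_space_shift[OF p x] lp_space_mult_bounded[OF p x M])
  finally show ?thesis .
qed

lemma jacobi_inj_lp: "inj_on (jacobi c) (lp_space p)"
proof (rule inj_onI)
  fix x y assume x: "x \<in> lp_space p" and y: "y \<in> lp_space p" and eq: "jacobi c x = jacobi c y"
  obtain Bx By where "\<And>n. norm (x n) \<le> Bx" "\<And>n. norm (y n) \<le> By"
    using lp_space_bounded[OF p x] lp_space_bounded[OF p y] by blast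
  then have bounded: "norm (x n - y n) \<le> Bx + By" for n
    using norm_triangle_ineq4[of "x n" "y n"] by (smt (verit))
  have "jacobi c (\<lambda>n. x n - y n) n = 0" for n using eq by (simp add: jacobi_diff)
  then have "(\<lambda>n. x n - y n) n = 0" for n by (rule bounded_solution_eq_0) (rule bounded)
  then show "x = y" by auto
qed

lemma jacobi_bounded_below_reflect: "jacobi_bounded_below p (\<lambda>n. c (- n)) C M L"
  using p sections_bounded_below_reflect[OF sections] C M L L_large by unfold_locales auto

lemma decaying_solution_left:
  "\<exists>\<psi>. (\<forall>n. jacobi c \<psi> n = 0) \<and> \<psi> \<noteq> (\<lambda>_. 0) \<and> (\<forall>\<epsilon>>0. \<exists>N. \<forall>n\<le>N. norm (\<psi> n) \<le> \<epsilon>)"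
proof -
  interpret reflected: jacobi_bounded_below p "\<lambda>n. c (- n)" C M L
    by (rule jacobi_bounded_below_reflect)
  obtain \<psi> where sol: "\<And>n. jacobi (\<lambda>n. c (- n)) \<psi> n = 0" and nz: "\<psi> \<noteq> (\<lambda>_. 0)"
    and decay: "\<forall>\<epsilon>>0. \<exists>N. \<forall>n\<ge>N. norm (\<psi> n) \<le> \<epsilon>"
    using reflected.decaying_solution_right by blast
  have "jacobi c (\<lambda>n. \<psi> (- n)) n = 0" for n
    using jacobi_reflect[of "\<lambda>n. c (- n)" \<psi> n] sol[of "- n"] by simp
  moreover have "(\<lambda>n. \<psi> (- n)) \<noteq> (\<lambda>_. 0)"
    using nz by (auto simp: fun_eq_iff) (metis minus_minus)
  moreover have "\<forall>\<epsilon>>0. \<exists>N. \<forall>n\<le>N. norm (\<psi> (- n)) \<le> \<epsilon>"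
  proof (intro allI impI)
    fix \<epsilon> :: real assume "\<epsilon> > 0"
    then obtain N where "\<And>n. N \<le> n \<Longrightarrow> norm (\<psi> n) \<le> \<epsilon>" using decay by blast
    then show "\<exists>N. \<forall>n\<le>N. norm (\<psi> (- n)) \<le> \<epsilon>" by (intro exI[of _ "- N"]) auto
  qed
  ultimately show ?thesis by blast
qed

lemma wronskian_decaying_solutions_nonzero:
  assumes u: "\<And>n. jacobi c u n = 0" "u \<noteq> (\<lambda>_. 0)" "\<forall>\<epsilon>>0. \<exists>N. \<forall>n\<le>N. norm (u n) \<le> \<epsilon>"
    and v: "\<And>n. jacobi c v n = 0" "v \<noteq> (\<lambda>_. 0)" "\<forall>\<epsilon>>0. \<exists>N. \<forall>n\<ge>N. norm (v n) \<le> \<epsilon>"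
  shows "wronskian u v 0 \<noteq> 0"
proof
  assume "wronskian u v 0 = 0"
  then obtain s where s: "v = (\<lambda>n. s * u n)" by (rule wronskian_eq_0_imp_multiple[OF u(1,2) v(1)])
  obtain N1 where N1: "\<And>n. N1 \<le> n \<Longrightarrow> norm (v n) \<le> 1" using v(3) zero_less_one by blast
  obtain N2 where N2: "\<And>n. n \<le> N2 \<Longrightarrow> norm (u n) \<le> 1" using u(3) zero_less_one by blast
  have "norm (v n) \<le> norm s" if "n \<le> N2" for n
    using N2[OF that] unfolding s by (simp add: norm_mult mult_left_le)
  then obtain B where "\<And>n. norm (v n) \<le> B"
    using bounded_if_bounded_tails[where f = v and Nr = N1 and Br = 1 and Nl = N2 and Bl = "norm s"] N1
    by blast
  then have "v n = 0" for n by (rule bounded_solution_eq_0[OF v(1)])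
  then show False using v(2) by auto
qed


lemma solution_with_small_tails:
  assumes f: "\<And>n. k < \<bar>n\<bar> \<Longrightarrow> f n = 0"
  obtains x K where "\<And>n. jacobi c x n = f n" "1 \<le> K" "k + 3 \<le> K"
    "\<And>n. K - 1 \<le> \<bar>n\<bar> \<Longrightarrow> norm (x n) \<le> 1 / 4"
proof -
  obtain u where u: "\<And>n. jacobi c u n = 0" "u \<noteq> (\<lambda>_. 0)" "\<forall>\<epsilon>>0. \<exists>N. \<forall>n\<le>N. norm (u n) \<le> \<epsilon>"
    using decaying_solution_left by blast
  obtain v where v: "\<And>n. jacobi c v n = 0" "v \<noteq> (\<lambda>_. 0)" "\<forall>\<epsilon>>0. \<exists>N. \<forall>n\<ge>N. norm (v n) \<le> \<epsilon>"
    using decaying_solution_right by blast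
  obtain x a b where x: "\<And>n. jacobi c x n = f n" and left: "\<And>n. n \<le> - k \<Longrightarrow> x n = a * u n"
    and right: "\<And>n. k + 1 \<le> n \<Longrightarrow> x n = b * v n"
    using jacobi_solution_with_tails[OF u(1) v(1) wronskian_decaying_solutions_nonzero[OF u v],
        where k = k and f = f, OF f] by blast
  have quarter: "t * (1 / (4 * (t + 1))) \<le> 1 / 4" if "0 \<le> t" for t :: real
    using that by (simp add: field_simps)
  obtain Nr where Nr: "\<And>n. Nr \<le> n \<Longrightarrow> norm (v n) \<le> 1 / (4 * (norm b + 1))"
    using v(3) by (metis add_nonneg_pos divide_pos_pos mult_pos_pos norm_ge_zero zero_less_numeral zero_less_one)
  obtain Nl where Nl: "\<And>n. n \<le> Nl \<Longrightarrow> norm (u n) \<le> 1 / (4 * (norm a + 1))"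
    using u(3) by (metis add_nonneg_pos divide_pos_pos mult_pos_pos norm_ge_zero zero_less_numeral zero_less_one)
  define K where "K = max (max 0 (k + 2)) (max Nr (- Nl)) + 1"
  show ?thesis
  proof (rule that[OF x])
    show "1 \<le> K" "k + 3 \<le> K" unfolding K_def by auto
    show "norm (x n) \<le> 1 / 4" if "K - 1 \<le> \<bar>n\<bar>" for n
    proof (cases "0 \<le> n")
      case True
      then have "k + 1 \<le> n" "Nr \<le> n" using that unfolding K_def by auto
      then show ?thesis
        using right Nr quarter[of "norm b"] by (smt (verit) mult_left_mono norm_ge_zero norm_mult)
    next
      case False
      then have "n \<le> - k" "n \<le> Nl" using that unfolding K_def by auto
      then show ?thesis
        using left Nl quarter[of "norm a"] by (smt (verit) mult_left_mono norm_ge_zero norm_mult)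
    qed
  qed
qed

lemma truncated_solution:
  assumes Y: "\<And>S. finite S \<Longrightarrow> lp_mass p y S \<le> Y"
  obtains x where "\<And>n. \<bar>n\<bar> \<le> k \<Longrightarrow> jacobi c x n = y n"
    and "\<And>S. finite S \<Longrightarrow> lp_mass p x S \<le> C * (2 powr lp_exponent p * (Y + 1))"
proof -
  let ?e = "lp_exponent p"
  define yk where "yk n = (if \<bar>n\<bar> \<le> k then y n else 0)" for n
  have "yk n = 0" if "k < \<bar>n\<bar>" for n using that unfolding yk_def by auto
  then obtain x K where x: "\<And>n. jacobi c x n = yk n" and K: "1 \<le> K" "k + 3 \<le> K"
    and small: "\<And>n. K - 1 \<le> \<bar>n\<bar> \<Longrightarrow> norm (x n) \<le> 1 / 4"
    using solution_with_small_tails by blast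
  define xK where "xK n = (if \<bar>n\<bar> \<le> K then x n else 0)" for n
  define r where "r n = jacobi c xK n - yk n" for n
  have yk0: "yk n = 0" if "K \<le> \<bar>n\<bar>" for n using that K unfolding yk_def by auto
  have "lp_mass p (jacobi c xK) {- K - 1..K + 1} \<le> 2 powr ?e * (Y + 1)"
  proof -
    have "jacobi c xK = (\<lambda>n. yk n + r n)" unfolding r_def by auto
    then have "lp_mass p (jacobi c xK) {- K - 1..K + 1}
        \<le> 2 powr ?e * (lp_mass p yk {- K - 1..K + 1} + lp_mass p r {- K - 1..K + 1})"
      using lp_mass_add_le[OF _ p, of "{- K - 1..K + 1}" yk r] by simp
    also have "lp_mass p yk {- K - 1..K + 1} \<le> lp_mass p y {- K - 1..K + 1}"
      by (rule lp_mass_mono[OF _ p]) (auto simp: yk_def)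
    also have "\<dots> \<le> Y" by (rule Y) simp
    also have "lp_mass p r {- K - 1..K + 1} \<le> 1"
      unfolding r_def xK_def by (rule lp_mass_jacobi_truncate_residual_le[OF p _ x yk0 small K(1)]) simp
    finally show ?thesis by simp
  qed
  moreover have "lp_mass p xK {- K..K} \<le> C * lp_mass p (jacobi c xK) {- K - 1..K + 1}"
    by (rule sections_bounded_belowD[OF sections]) (auto simp: xK_def)
  ultimately have main: "lp_mass p xK {- K..K} \<le> C * (2 powr ?e * (Y + 1))"
    using C by (meson mult_left_mono order_trans)
  show ?thesis
  proof (rule that[of xK])
    show "jacobi c xK n = y n" if "\<bar>n\<bar> \<le> k" for n
      using jacobi_truncate(2)[OF x yk0 small K(1), of n] that K unfolding xK_def yk_def by (auto simp: abs_le_iff)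
    show "lp_mass p xK S \<le> C * (2 powr ?e * (Y + 1))" if "finite S" for S
    proof -
      have "lp_mass p xK S \<le> lp_mass p xK {- K..K}"
        by (rule lp_mass_le_support[OF that]) (auto simp: xK_def)
      then show ?thesis using main by linarith
    qed
  qed
qed


lemma solution_small_inside_window:
  assumes B: "\<And>S. finite S \<Longrightarrow> lp_mass p h S \<le> B" and \<epsilon>: "0 < \<epsilon>"
    and D: "B < 2 ^ D * \<epsilon> powr lp_exponent p"
    and sol: "\<And>m. \<bar>m\<bar> \<le> (\<bar>n div L\<bar> + int D + 2) * L \<Longrightarrow> jacobi c h m = 0"
  shows "norm (h n) \<le> \<epsilon>"
proof -
  define j where "j = n div L"
  have "halving_at (block_mass h) i" if "j - int D \<le> i" "i \<le> j + int D" for i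
  proof (rule halving_at_block_mass)
    fix m assume "m \<in> {(i - 1) * L ..< (i + 2) * L}"
    moreover have "(- (\<bar>j\<bar> + int D + 2)) * L \<le> (i - 1) * L" "(i + 2) * L \<le> (\<bar>j\<bar> + int D + 2) * L"
      using that L_pos by (intro mult_right_mono; linarith)+
    ultimately have "\<bar>m\<bar> \<le> (\<bar>j\<bar> + int D + 2) * L"
      unfolding mult_minus_left abs_le_iff by auto
    then show "jacobi c h m = 0" unfolding j_def by (rule sol)
  qed
  then have "2 ^ nat (min (j - (j - int D)) (j + int D - j)) * block_mass h j \<le> B"
    using block_mass_nonneg B unfolding block_mass_def by (intro halving_interior_bound) auto
  then have "2 ^ D * block_mass h j \<le> B" by simp
  then have "2 ^ D * block_mass h j \<le> 2 ^ D * \<epsilon> powr lp_exponent p" using D by linarith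
  then have "block_mass h j \<le> \<epsilon> powr lp_exponent p" by simp
  then show ?thesis using norm_le_if_block_mass_le[OF mem_block_div[OF L_pos]] \<epsilon> unfolding j_def by simp
qed

lemma approximate_solutions_cauchy:
  assumes X: "\<And>k n. \<bar>n\<bar> \<le> int k \<Longrightarrow> jacobi c (X k) n = y n"
    and B: "\<And>k l S. finite S \<Longrightarrow> lp_mass p (\<lambda>m. X l m - X k m) S \<le> B"
  shows "Cauchy (\<lambda>k. X k n)"
proof (rule CauchyI)
  fix \<epsilon> :: real assume "0 < \<epsilon>"
  obtain D :: nat where D: "B / (\<epsilon> / 2) powr lp_exponent p < 2 ^ D" using real_arch_pow[of 2] by auto
  define N where "N = nat ((\<bar>n div L\<bar> + int D + 2) * L)"
  have "norm (X a n - X b n) \<le> \<epsilon> / 2" if "N \<le> a" "N \<le> b" for a b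
  proof (rule solution_small_inside_window[OF B])
    show "B < 2 ^ D * (\<epsilon> / 2) powr lp_exponent p" using D \<open>0 < \<epsilon>\<close> by (simp add: divide_less_eq mult.commute)
    show "jacobi c (\<lambda>m. X a m - X b m) m = 0" if "\<bar>m\<bar> \<le> (\<bar>n div L\<bar> + int D + 2) * L" for m
      using X[of m a] X[of m b] that \<open>N \<le> a\<close> \<open>N \<le> b\<close> unfolding N_def by (simp add: jacobi_diff)
  qed (use \<open>0 < \<epsilon>\<close> in auto)
  then show "\<exists>N. \<forall>a\<ge>N. \<forall>b\<ge>N. norm (X a n - X b n) < \<epsilon>"
    using \<open>0 < \<epsilon>\<close> by (smt (verit, best) field_sum_of_halves)
qed

lemma jacobi_surj_lp:
  assumes y: "y \<in> lp_space p"
  obtains x where "x \<in> lp_space p" "jacobi c x = y"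
proof -
  let ?e = "lp_exponent p"
  obtain Y where Y: "\<And>S. finite S \<Longrightarrow> lp_mass p y S \<le> Y"
    using y lp_space_iff_lp_mass_bounded[OF p] by blast
  define X0 where "X0 = C * (2 powr ?e * (Y + 1))"
  have "\<forall>k::nat. \<exists>x. (\<forall>n. \<bar>n\<bar> \<le> int k \<longrightarrow> jacobi c x n = y n) \<and> (\<forall>S. finite S \<longrightarrow> lp_mass p x S \<le> X0)"
    using truncated_solution[OF Y] unfolding X0_def by metis
  then obtain X where X: "\<And>k n. \<bar>n\<bar> \<le> int k \<Longrightarrow> jacobi c (X k) n = y n"
    and X_mass: "\<And>k S. finite S \<Longrightarrow> lp_mass p (X k) S \<le> X0"
    by metis
  have diff_mass: "lp_mass p (\<lambda>m. X l m - X k m) S \<le> 2 powr ?e * (X0 + X0)" if "finite S" for k l S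
  proof -
    have "lp_mass p (\<lambda>m. X l m + - X k m) S \<le> 2 powr ?e * (lp_mass p (X l) S + lp_mass p (\<lambda>m. - X k m) S)"
      by (rule lp_mass_add_le[OF that p])
    also have "lp_mass p (\<lambda>m. - X k m) S = lp_mass p (X k) S" by (rule lp_mass_cong) simp
    also have "2 powr ?e * (lp_mass p (X l) S + lp_mass p (X k) S) \<le> 2 powr ?e * (X0 + X0)"
      using X_mass[OF that, of l] X_mass[OF that, of k] by (intro mult_left_mono) auto
    finally show ?thesis by simp
  qed
  have "Cauchy (\<lambda>k. X k n)" for n by (rule approximate_solutions_cauchy[OF X diff_mass])
  define x where "x n = lim (\<lambda>k. X k n)" for n
  have lim: "(\<lambda>k. X k n) \<longlonglongrightarrow> x n" for n
    unfolding x_def using \<open>Cauchy (\<lambda>k. X k n)\<close> Cauchy_convergent_iff convergent_LIMSEQ_iff by blast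
  have "jacobi c x n = y n" for n
  proof -
    have "(\<lambda>k. jacobi c (X k) n) \<longlonglongrightarrow> jacobi c x n"
      unfolding jacobi_def by (intro tendsto_intros lim)
    moreover have "eventually (\<lambda>k. jacobi c (X k) n = y n) sequentially"
      unfolding eventually_sequentially by (rule exI[of _ "nat \<bar>n\<bar>"]) (auto intro: X)
    then have "(\<lambda>k. jacobi c (X k) n) \<longlonglongrightarrow> y n" by (rule tendsto_eventually)
    ultimately show ?thesis using LIMSEQ_unique by blast
  qed
  moreover have "lp_mass p x S \<le> X0" if S: "finite S" for S
  proof (rule tendsto_upperbound)
    show "(\<lambda>k. lp_mass p (X k) S) \<longlonglongrightarrow> lp_mass p x S" by (rule tendsto_lp_mass[OF S p lim])
  qed (use X_mass[OF S] in auto)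
  then have "x \<in> lp_space p" using lp_space_iff_lp_mass_bounded[OF p] by blast
  ultimately show ?thesis using that by auto
qed

theorem jacobi_bij_lp: "bij_betw (jacobi c) (lp_space p) (lp_space p)"
  unfolding bij_betw_def using jacobi_inj_lp jacobi_maps_lp jacobi_surj_lp by (auto simp: image_iff) metis

end

theorem jacobi_bij_lp_if_sections_bounded_below:
  assumes "1 \<le> p" "sections_bounded_below p c C" "0 \<le> C" "\<And>n. norm (c n) \<le> M"
  shows "bij_betw (jacobi c) (lp_space p) (lp_space p)"
proof -
  interpret jacobi_bounded_below p c C M "max 2 \<lceil>24 * C\<rceil>"
    using assms by unfold_locales (auto intro: le_of_int_ceiling order_trans)
  show ?thesis by (rule jacobi_bij_lp)
qed

section \<open>The half-line operator\<close>

definition jacobi_half :: "(int \<Rightarrow> complex) \<Rightarrow> (nat \<Rightarrow> complex) \<Rightarrow> nat \<Rightarrow> complex" where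
  "jacobi_half c x n = x (n + 1) + (if n = 0 then 0 else x (n - 1)) + c (int n) * x n"

lemma jacobi_half_diff: "jacobi_half c (\<lambda>n. x n - y n) n = jacobi_half c x n - jacobi_half c y n"
  unfolding jacobi_half_def by (simp add: algebra_simps)

lemma jacobi_half_scale: "jacobi_half c (\<lambda>n. t * x n) n = t * jacobi_half c x n"
  unfolding jacobi_half_def by (simp add: algebra_simps)

definition half_kernel :: "(int \<Rightarrow> complex) \<Rightarrow> nat \<Rightarrow> complex" where
  "half_kernel c n = jacobi_ivp c (\<lambda>_. 0) 1 (- c 0) (int n)"

lemma half_kernel_0: "half_kernel c 0 = 1"
  unfolding half_kernel_def by (simp add: jacobi_ivp.simps)

lemma jacobi_half_half_kernel: "jacobi_half c (half_kernel c) n = 0"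
proof (cases n)
  case 0
  then show ?thesis unfolding jacobi_half_def half_kernel_def by (simp add: jacobi_ivp.simps)
next
  case (Suc m)
  then have "int (n - 1) = int n - 1" by simp
  then show ?thesis
    using jacobi_jacobi_ivp[of c "\<lambda>_. 0" 1 "- c 0" "int n"] Suc
    unfolding jacobi_half_def half_kernel_def jacobi_def by simp
qed

lemma jacobi_half_kernel_eq:
  assumes "\<And>n. jacobi_half c y n = 0"
  shows "y = (\<lambda>n. y 0 * half_kernel c n)"
proof -
  define z where "z n = y n - y 0 * half_kernel c n" for n
  have z: "jacobi_half c z n = 0" for n
    unfolding z_def jacobi_half_diff jacobi_half_scale by (simp add: assms jacobi_half_half_kernel)
  have "z k = 0 \<and> z (Suc k) = 0" for k
  proof (induction k)
    case 0
    then show ?case using z[of 0] by (simp add: z_def half_kernel_0 jacobi_half_def)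
  next
    case (Suc k)
    then show ?case using z[of "Suc k"] by (simp add: jacobi_half_def)
  qed
  then have "z n = 0" for n by blast
  then show ?thesis
  proof (intro ext)
    fix n
    assume "\<And>n. z n = 0"
    then have "z n = 0" .
    then show "y n = y 0 * half_kernel c n" unfolding z_def by simp
  qed
qed

definition half_sections_bounded_below :: "ereal \<Rightarrow> (int \<Rightarrow> complex) \<Rightarrow> nat \<Rightarrow> real \<Rightarrow> bool" where
  "half_sections_bounded_below p c R C \<longleftrightarrow> (\<forall>x a b. R \<le> a \<longrightarrow> (\<forall>n. n < a \<or> b < n \<longrightarrow> x n = 0) \<longrightarrow>
       lp_mass p x {a..b} \<le> C * lp_mass p (jacobi_half c x) {a - 1..b + 1})"

lemma hump_exists:
  assumes p: "1 \<le> p" and unbounded: "\<not> half_sections_bounded_below p c R (4 ^ k)"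
  shows "\<exists>x a b. R \<le> a \<and> (\<forall>n. n < a \<or> b < n \<longrightarrow> x n = 0) \<and> lp_mass p x {a..b} = 2 ^ k
           \<and> lp_mass p (jacobi_half c x) {a - 1..b + 1} \<le> (1 / 2) ^ k"
proof -
  let ?e = "lp_exponent p"
  obtain x a b where x: "R \<le> a" "\<forall>n. n < a \<or> b < n \<longrightarrow> x n = 0"
    and lt: "4 ^ k * lp_mass p (jacobi_half c x) {a - 1..b + 1} < lp_mass p x {a..b}"
    using unbounded unfolding half_sections_bounded_below_def by (auto simp: not_le)
  define mx where "mx = lp_mass p x {a..b}"
  define my where "my = lp_mass p (jacobi_half c x) {a - 1..b + 1}"
  have my: "0 \<le> my" unfolding my_def by (rule lp_mass_nonneg) simp
  then have mx: "0 < mx" using lt unfolding mx_def my_def by (smt (verit) mult_nonneg_nonneg zero_le_power)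
  define t where "t = (2 ^ k / mx) powr (1 / ?e)"
  have t: "0 < t" "t powr ?e = 2 ^ k / mx"
    unfolding t_def using mx lp_exponent_pos[OF p] by (simp_all add: powr_powr)
  show ?thesis
  proof (intro exI conjI)
    show "lp_mass p (\<lambda>n. of_real t * x n) {a..b} = 2 ^ k"
      using lp_mass_scale[OF _ p, of "{a..b}" "of_real t" x] t mx unfolding mx_def by simp
    have "lp_mass p (jacobi_half c (\<lambda>n. of_real t * x n)) {a - 1..b + 1} = 2 ^ k * my / mx"
      using lp_mass_scale[OF _ p, of "{a - 1..b + 1}" "of_real t" "jacobi_half c x"] t
      unfolding my_def jacobi_half_scale by simp
    also have "\<dots> \<le> (1 / 2) ^ k"
    proof -
      have "2 ^ k * (2 ^ k * my) \<le> mx"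
        using lt unfolding mx_def my_def by (simp add: power_mult_distrib[symmetric] mult.assoc[symmetric])
      then show ?thesis using mx by (simp add: divide_le_eq power_one_over field_simps)
    qed
    finally show "lp_mass p (jacobi_half c (\<lambda>n. of_real t * x n)) {a - 1..b + 1} \<le> (1 / 2) ^ k" .
  qed (use x in auto)
qed

locale hump_sequence =
  fixes p :: ereal and c :: "int \<Rightarrow> complex" and xs :: "nat \<Rightarrow> nat \<Rightarrow> complex" and as bs :: "nat \<Rightarrow> nat"
  assumes p: "1 \<le> p"
    and start: "1 \<le> as 0"
    and separated: "\<And>k. bs k + 3 \<le> as (Suc k)"
    and support: "\<And>k n. n < as k \<or> bs k < n \<Longrightarrow> xs k n = 0"
    and mass: "\<And>k. lp_mass p (xs k) {as k..bs k} = 2 ^ k"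
    and image_mass: "\<And>k. lp_mass p (jacobi_half c (xs k)) {as k - 1..bs k + 1} \<le> (1 / 2) ^ k"
begin

lemma as_le_bs: "as k \<le> bs k"
  using mass[of k] by (cases "as k \<le> bs k") auto

lemma separated_less: "k < k' \<Longrightarrow> bs k + 3 \<le> as k'"
proof (induction k')
  case (Suc k')
  then show ?case using separated[of k'] as_le_bs[of k'] by (cases "k = k'") auto
qed simp

lemma less_as: "k < as k"
proof (induction k)
  case (Suc k)
  then show ?case using separated[of k] as_le_bs[of k] by linarith
qed (use start in simp)

lemma other_humps_vanish:
  assumes "as k - 2 \<le> n" "n \<le> bs k + 2" "k' \<noteq> k"
  shows "xs k' n = 0"
proof (cases "k' < k")
  case True
  then show ?thesis using separated_less[of k' k] assms by (intro support) linarith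
next
  case False
  then show ?thesis using separated_less[of k k'] assms by (intro support) linarith
qed

definition hump_support :: "nat set \<Rightarrow> nat set" where
  "hump_support S = (\<Union>k\<in>S. {as k..bs k})"

text \<open>Since \<open>k < as k\<close>, only \<open>k \<le> n\<close> can contribute at \<open>n\<close>; the cut-off makes the sum finite.\<close>

definition superpose :: "nat set \<Rightarrow> nat \<Rightarrow> complex" where
  "superpose S n = (\<Sum>k\<in>S \<inter> {..n}. xs k n)"

lemma superpose_near:
  assumes "as k - 2 \<le> n" "n \<le> bs k + 2"
  shows "superpose S n = (if k \<in> S then xs k n else 0)"
proof -
  have "superpose S n = (\<Sum>k'\<in>S \<inter> {..n}. if k' = k then xs k n else 0)"
    unfolding superpose_def by (rule sum.cong) (use other_humps_vanish[OF assms] in auto)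
  also have "\<dots> = (if k \<in> S \<inter> {..n} then xs k n else 0)" by (simp add: sum.delta)
  also have "\<dots> = (if k \<in> S then xs k n else 0)"
    using support[of n k] less_as[of k] by auto
  finally show ?thesis .
qed

lemma superpose_outside: "n \<notin> hump_support S \<Longrightarrow> superpose S n = 0"
  unfolding superpose_def hump_support_def by (rule sum.neutral) (auto intro!: support)

lemma jacobi_half_superpose_near:
  assumes "as k - 1 \<le> n" "n \<le> bs k + 1"
  shows "jacobi_half c (superpose S) n = (if k \<in> S then jacobi_half c (xs k) n else 0)"
  using superpose_near[of k "n + 1" S] superpose_near[of k n S] superpose_near[of k "n - 1" S] assms
  unfolding jacobi_half_def by (cases "n = 0") auto

lemma jacobi_half_superpose_far:
  assumes "\<And>k. \<not> (as k - 1 \<le> n \<and> n \<le> bs k + 1)"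
  shows "jacobi_half c (superpose S) n = 0"
proof -
  have "superpose S m = 0" if m: "m \<in> {n, n + 1} \<or> (n \<noteq> 0 \<and> m = n - 1)" for m
  proof (rule superpose_outside)
    show "m \<notin> hump_support S"
    proof
      assume "m \<in> hump_support S"
      then obtain k where "as k \<le> m" "m \<le> bs k" unfolding hump_support_def by auto
      then show False using assms[of k] m by (auto; arith)
    qed
  qed
  then show ?thesis unfolding jacobi_half_def by auto
qed

lemma jacobi_half_superpose_lp: "jacobi_half c (superpose S) \<in> lp_space p"
proof -
  have "lp_mass p (jacobi_half c (superpose S)) T \<le> 2" if T: "finite T" for T
  proof -
    define K where "K = Suc (Max (insert 0 T))"
    define E where "E k = {as k - 1..bs k + 1}" for k
    have "lp_mass p (jacobi_half c (superpose S)) T \<le> lp_mass p (jacobi_half c (superpose S)) (\<Union>k<K. E k)"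
    proof (rule lp_mass_le_support[OF T])
      fix n assume n: "n \<in> T" "n \<notin> (\<Union>k<K. E k)"
      have "n < K" using n T unfolding K_def by (simp add: le_imp_less_Suc)
      then have "\<not> (as k - 1 \<le> n \<and> n \<le> bs k + 1)" for k
        using n less_as[of k] unfolding E_def by (cases "k < K") auto
      then show "jacobi_half c (superpose S) n = 0" by (rule jacobi_half_superpose_far)
    qed (simp add: E_def)
    also have "\<dots> \<le> (\<Sum>k<K. lp_mass p (jacobi_half c (superpose S)) (E k))"
      by (rule lp_mass_UN_le) (simp add: E_def)
    also have "\<dots> \<le> (\<Sum>k<K. (1 / 2) ^ k)"
    proof (rule sum_mono)
      fix k
      have "lp_mass p (jacobi_half c (superpose S)) (E k)
          = lp_mass p (\<lambda>n. if k \<in> S then jacobi_half c (xs k) n else 0) (E k)"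
        by (rule lp_mass_cong) (use jacobi_half_superpose_near[of k _ S] in \<open>simp add: E_def\<close>)
      also have "\<dots> \<le> (1 / 2) ^ k"
        using image_mass[of k] by (cases "k \<in> S") (simp_all add: E_def lp_mass_zero)
      finally show "lp_mass p (jacobi_half c (superpose S)) (E k) \<le> (1 / 2) ^ k" .
    qed
    also have "\<dots> \<le> 2" by (simp add: sum_gp_strict)
    finally show ?thesis .
  qed
  then show ?thesis using lp_space_iff_lp_mass_bounded[OF p] by blast
qed

lemma superpose_not_lp:
  assumes "infinite S"
  shows "superpose S \<notin> lp_space p"
proof
  assume "superpose S \<in> lp_space p"
  then obtain B where B: "\<And>T. finite T \<Longrightarrow> lp_mass p (superpose S) T \<le> B"
    using lp_space_iff_lp_mass_bounded[OF p] by blast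
  obtain j :: nat where j: "B < 2 ^ j" using real_arch_pow[of 2] by auto
  obtain k where k: "k \<in> S" "j \<le> k" using assms by (meson infinite_nat_iff_unbounded_le)
  have "lp_mass p (superpose S) {as k..bs k} = lp_mass p (xs k) {as k..bs k}"
    by (rule lp_mass_cong) (use k superpose_near[of k _ S] in auto)
  then have "(2::real) ^ k \<le> B" using B[of "{as k..bs k}"] mass[of k] by simp
  moreover have "(2::real) ^ j \<le> 2 ^ k" using k by (intro power_increasing) auto
  ultimately show False using j by linarith
qed

text \<open>Each superposition over an infinite set is mapped into \<open>\<ell>\<^sup>p\<close> without being in \<open>\<ell>\<^sup>p\<close>;
  a preimage in \<open>\<ell>\<^sup>p\<close> differs from it by a nonzero multiple of \<open>half_kernel c\<close>.\<close>

lemma half_kernel_eq_lp_off_humps: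
  assumes bij: "bij_betw (jacobi_half c) (lp_space p) (lp_space p)" and "infinite S"
  obtains X where "X \<in> lp_space p" "\<And>n. n \<notin> hump_support S \<Longrightarrow> half_kernel c n = X n"
proof -
  obtain Y where Y: "Y \<in> lp_space p" "jacobi_half c Y = jacobi_half c (superpose S)"
    using jacobi_half_superpose_lp bij unfolding bij_betw_def by (metis imageE)
  define t where "t = superpose S 0 - Y 0"
  have "jacobi_half c (\<lambda>n. superpose S n - Y n) n = 0" for n using Y(2) by (simp add: jacobi_half_diff)
  then have diff: "(\<lambda>n. superpose S n - Y n) = (\<lambda>n. t * half_kernel c n)"
    using jacobi_half_kernel_eq unfolding t_def by metis
  have t: "t \<noteq> 0"
  proof
    assume "t = 0"
    then have "superpose S = Y" using diff by (auto simp: fun_eq_iff)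
    then show False using superpose_not_lp[OF assms(2)] Y(1) by simp
  qed
  show ?thesis
  proof (rule that)
    show "(\<lambda>n. (- 1 / t) * Y n) \<in> lp_space p"
      using lp_space_mult_bounded[OF p Y(1), of "\<lambda>_. - 1 / t" "norm (- 1 / t)"] by simp
    show "half_kernel c n = - 1 / t * Y n" if "n \<notin> hump_support S" for n
      using fun_cong[OF diff, of n] superpose_outside[OF that] t by (simp add: field_simps)
  qed
qed

lemma not_bij: "\<not> bij_betw (jacobi_half c) (lp_space p) (lp_space p)"
proof
  assume bij: "bij_betw (jacobi_half c) (lp_space p) (lp_space p)"
  define Ev where "Ev = {k :: nat. even k}"
  define Od where "Od = {k :: nat. odd k}"
  have "\<exists>n\<ge>m. even n" "\<exists>n\<ge>m. odd n" for m :: nat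
    by (rule exI[of _ "2 * m"], simp) (rule exI[of _ "2 * m + 1"], simp)
  then have "infinite Ev" "infinite Od"
    unfolding Ev_def Od_def infinite_nat_iff_unbounded_le by auto
  then obtain XE XO where XE: "XE \<in> lp_space p" "\<And>n. n \<notin> hump_support Ev \<Longrightarrow> half_kernel c n = XE n"
    and XO: "XO \<in> lp_space p" "\<And>n. n \<notin> hump_support Od \<Longrightarrow> half_kernel c n = XO n"
    using half_kernel_eq_lp_off_humps[OF bij] by metis
  obtain BE BO where BE: "\<And>T. finite T \<Longrightarrow> lp_mass p XE T \<le> BE"
    and BO: "\<And>T. finite T \<Longrightarrow> lp_mass p XO T \<le> BO"
    using XE(1) XO(1) lp_space_iff_lp_mass_bounded[OF p] by metis
  have disjoint: "hump_support Ev \<inter> hump_support Od = {}"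
  proof -
    have "k = k'" if "as k \<le> n" "n \<le> bs k" "as k' \<le> n" "n \<le> bs k'" for k k' n
      using that separated_less[of k k'] separated_less[of k' k] by (cases k k' rule: linorder_cases) auto
    then show ?thesis unfolding hump_support_def Ev_def Od_def by (auto simp: disjoint_iff)
  qed
  have "lp_mass p (half_kernel c) T \<le> BE + BO" if T: "finite T" for T
  proof -
    define TE where "TE = T - hump_support Ev"
    define TO where "TO = T - hump_support Od"
    have fin: "finite TE" "finite TO" using T unfolding TE_def TO_def by auto
    have "lp_mass p (half_kernel c) T \<le> lp_mass p (half_kernel c) (TE \<union> TO)"
      by (rule lp_mass_subset) (use fin disjoint in \<open>auto simp: TE_def TO_def\<close>)
    also have "\<dots> \<le> lp_mass p (half_kernel c) TE + lp_mass p (half_kernel c) TO" by (rule lp_mass_union_le[OF fin])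
    also have "lp_mass p (half_kernel c) TE = lp_mass p XE TE" by (rule lp_mass_cong) (simp add: TE_def XE(2))
    also have "lp_mass p (half_kernel c) TO = lp_mass p XO TO" by (rule lp_mass_cong) (simp add: TO_def XO(2))
    finally show ?thesis using BE[OF fin(1)] BO[OF fin(2)] by linarith
  qed
  then have "half_kernel c \<in> lp_space p" using lp_space_iff_lp_mass_bounded[OF p] by blast
  moreover have "jacobi_half c (half_kernel c) = jacobi_half c (\<lambda>_. 0)"
    using jacobi_half_half_kernel[of c] by (simp add: fun_eq_iff jacobi_half_def[of c "\<lambda>_. 0"])
  ultimately have "half_kernel c = (\<lambda>_. 0)"
    using bij zero_in_lp_space[OF p] unfolding bij_betw_def inj_on_def by blast
  then show False using half_kernel_0[of c] by (metis zero_neq_one)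
qed

end

text \<open>Gliding hump: without a lower bound far out, normalized humps with ever smaller images can
  be placed one after another, contradicting invertibility (\<open>hump_sequence.not_bij\<close>).\<close>

lemma half_line_sections_bounded_below:
  assumes p: "1 \<le> p" and bij: "bij_betw (jacobi_half c) (lp_space p) (lp_space p)"
  obtains R C where "1 \<le> R" "0 \<le> C" "half_sections_bounded_below p c R C"
proof (rule ccontr)
  note bounded = that
  assume "\<not> thesis"
  then have unbounded: "\<not> half_sections_bounded_below p c R (4 ^ k)" if "1 \<le> R" for R k
    using bounded that by (meson zero_le_numeral zero_le_power)
  define hump where "hump k = (\<lambda>(x, a, b). 1 \<le> a \<and> (\<forall>n. n < a \<or> b < n \<longrightarrow> x n = 0)
      \<and> lp_mass p x {a..b} = 2 ^ k \<and> lp_mass p (jacobi_half c x) {a - 1..b + 1} \<le> (1 / 2) ^ k)" for k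
  have hump_after: "\<exists>h. hump k h \<and> R \<le> fst (snd h)" if R: "1 \<le> R" for k R
  proof -
    obtain x a b where "R \<le> a" "\<forall>n. n < a \<or> b < n \<longrightarrow> x n = 0" "lp_mass p x {a..b} = 2 ^ k"
      "lp_mass p (jacobi_half c x) {a - 1..b + 1} \<le> (1 / 2) ^ k"
      using hump_exists[OF p unbounded[OF R]] by blast
    then show ?thesis using R by (intro exI[of _ "(x, a, b)"]) (auto simp: hump_def)
  qed
  have "\<exists>h. \<forall>k. hump k (h k) \<and> snd (snd (h k)) + 3 \<le> fst (snd (h (Suc k)))"
  proof (rule dependent_nat_choice)
    show "\<exists>h. hump 0 h" using hump_after[of 1 0] by auto
    show "\<exists>h'. hump (Suc k) h' \<and> snd (snd h) + 3 \<le> fst (snd h')" for h k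
      using hump_after[of "snd (snd h) + 3" "Suc k"] by auto
  qed
  then obtain h where h: "\<And>k. hump k (h k)" "\<And>k. snd (snd (h k)) + 3 \<le> fst (snd (h (Suc k)))"
    by blast
  interpret hump_sequence p c "\<lambda>k. fst (h k)" "\<lambda>k. fst (snd (h k))" "\<lambda>k. snd (snd (h k))"
    by unfold_locales (use h p in \<open>auto simp: hump_def case_prod_beta\<close>)
  show False using not_bij bij by blast
qed

section \<open>Recurrence of the Sturmian potential\<close>

definition right_recurrent :: "(int \<Rightarrow> 'a) \<Rightarrow> bool" where
  "right_recurrent v \<longleftrightarrow> (\<forall>R a b. \<exists>m. R \<le> m \<and> (\<forall>n\<in>{a..b}. v (n + m) = v n))"

lemma right_recurrent_comp: "right_recurrent v \<Longrightarrow> right_recurrent (\<lambda>n. f (v n))"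
  unfolding right_recurrent_def by metis

lemma frac_mult_irrational_pos:
  assumes "\<alpha> \<notin> \<rat>" "1 \<le> j"
  shows "0 < frac (real j * \<alpha>)"
proof -
  have "real j * \<alpha> \<notin> \<int>"
  proof
    assume "real j * \<alpha> \<in> \<int>"
    then obtain z where "real j * \<alpha> = of_int z" by (auto elim: Ints_cases)
    then have "\<alpha> = of_int z / real j" using assms(2) by (simp add: field_simps)
    then show False using assms(1) by simp
  qed
  then show ?thesis using frac_ge_0[of "real j * \<alpha>"] frac_eq_0_iff[of "real j * \<alpha>"] by linarith
qed

text \<open>Kronecker's theorem, aimed below the least of the finitely many values \<open>frac (j \<alpha>)\<close>,
  \<open>1 \<le> j \<le> R\<close>.\<close>

lemma small_frac_mult_beyond:
  assumes \<alpha>: "\<alpha> \<notin> \<rat>" and \<eta>: "0 < \<eta>"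
  obtains k :: nat where "R \<le> int k" "0 < frac (real k * \<alpha>)" "frac (real k * \<alpha>) < \<eta>"
proof -
  define \<mu> where "\<mu> = Min ({\<eta>, 1} \<union> (\<lambda>j. frac (real j * \<alpha>)) ` {1..nat R})"
  have "\<mu> \<le> \<eta>" "\<mu> \<le> 1" unfolding \<mu>_def by (rule Min_le; simp)+
  moreover have "0 < \<mu>" unfolding \<mu>_def using frac_mult_irrational_pos[OF \<alpha>] \<eta> by (auto simp: Min_gr_iff)
  ultimately have \<mu>: "0 < \<mu>" "\<mu> \<le> \<eta>" "\<mu> \<le> 1" by simp_all
  have \<mu>_le: "\<mu> \<le> frac (real j * \<alpha>)" if "j \<in> {1..nat R}" for j
    unfolding \<mu>_def using that by (intro Min_le) auto
  have "0 \<le> \<mu> / 2" "\<mu> / 2 \<le> 1" "0 < \<mu> / 2" using \<mu> by auto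
  then obtain k where k: "k > 0" "\<bar>frac (real k * \<alpha>) - \<mu> / 2\<bar> < \<mu> / 2"
    using Kronecker_approx_1_explicit[OF \<alpha>] by blast
  then have small: "frac (real k * \<alpha>) < \<mu>" by linarith
  show ?thesis
  proof (rule that)
    show "R \<le> int k"
    proof (rule ccontr)
      assume "\<not> R \<le> int k"
      then have "k \<in> {1..nat R}" using k(1) by auto
      then show False using \<mu>_le[of k] small by linarith
    qed
    show "0 < frac (real k * \<alpha>)" using frac_mult_irrational_pos[OF \<alpha>] k(1) by simp
  qed (use small \<mu> in auto)
qed

lemma sturm_pot_right_recurrent:
  assumes \<alpha>: "0 \<le> \<alpha>" "\<alpha> \<le> 1" "\<alpha> \<notin> \<rat>"
  shows "right_recurrent (sturm_pot \<alpha> \<theta>)"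
  unfolding right_recurrent_def
proof (intro allI)
  fix R a b :: int
  define t where "t n = frac (of_int n * \<alpha> + \<theta>)" for n :: int
  define gap where "gap n = (if t n < 1 - \<alpha> then 1 - \<alpha> - t n else 1 - t n)" for n
  have t: "0 \<le> t n" "t n < 1" for n unfolding t_def by (simp_all add: frac_lt_1)
  have gap: "0 < gap n" for n unfolding gap_def using t[of n] by auto
  define \<delta> where "\<delta> = Min (insert 1 (gap ` {a..b}))"
  have "\<delta> \<le> gap n" if "n \<in> {a..b}" for n unfolding \<delta>_def by (rule Min_le) (use that in auto)
  moreover have "0 < \<delta>" unfolding \<delta>_def using gap by (auto simp: Min_gr_iff)
  ultimately have \<delta>: "0 < \<delta>" "\<And>n. n \<in> {a..b} \<Longrightarrow> \<delta> \<le> gap n" by auto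
  obtain k :: nat where k: "R \<le> int k" "0 < frac (real k * \<alpha>)" "frac (real k * \<alpha>) < \<delta>"
    using small_frac_mult_beyond[OF \<alpha>(3) \<delta>(1)] by blast
  define s where "s = frac (real k * \<alpha>)"
  have "sturm_pot \<alpha> \<theta> (n + int k) = sturm_pot \<alpha> \<theta> n" if n: "n \<in> {a..b}" for n
  proof -
    have s_gap: "s < gap n" using k \<delta>(2)[OF n] unfolding s_def by linarith
    then have "t n + s < 1" using t[of n] \<alpha>(1) unfolding gap_def by (auto split: if_splits)
    have "of_int (n + int k) * \<alpha> + \<theta> = (of_int n * \<alpha> + \<theta>) + real k * \<alpha>"
      by (simp add: algebra_simps)
    then have "frac (of_int (n + int k) * \<alpha> + \<theta>) = frac ((of_int n * \<alpha> + \<theta>) + real k * \<alpha>)"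
      by (rule arg_cong)
    also have "\<dots> = t n + s"
      using \<open>t n + s < 1\<close> unfolding t_def s_def by (simp add: frac_add)
    finally have shift: "frac (of_int (n + int k) * \<alpha> + \<theta>) = t n + s" .
    have "(t n + s \<in> {1 - \<alpha>..<1}) = (t n \<in> {1 - \<alpha>..<1})"
    proof (cases "t n < 1 - \<alpha>")
      case True
      then have "t n + s < 1 - \<alpha>" using s_gap unfolding gap_def by simp
      then show ?thesis using True by auto
    next
      case False
      have "0 < s" using k(2) unfolding s_def .
      then show ?thesis using False \<open>t n + s < 1\<close> by auto
    qed
    then show ?thesis unfolding sturm_pot_def shift using t_def by simp
  qed
  then show "\<exists>m. R \<le> m \<and> (\<forall>n\<in>{a..b}. sturm_pot \<alpha> \<theta> (n + m) = sturm_pot \<alpha> \<theta> n)"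
    using k(1) by blast
qed

section \<open>From the half-line to the line\<close>

lemma image_shift_nat_interval:
  assumes "1 \<le> a + m" "a \<le> b"
  shows "(\<lambda>k. int k - m) ` {nat (a + m)..nat (b + m)} = {a..b}"
proof
  show "(\<lambda>k. int k - m) ` {nat (a + m)..nat (b + m)} \<subseteq> {a..b}" using assms by auto
  show "{a..b} \<subseteq> (\<lambda>k. int k - m) ` {nat (a + m)..nat (b + m)}"
  proof
    fix n assume "n \<in> {a..b}"
    then have "nat (n + m) \<in> {nat (a + m)..nat (b + m)}" "int (nat (n + m)) - m = n" using assms by auto
    then show "n \<in> (\<lambda>k. int k - m) ` {nat (a + m)..nat (b + m)}" by (metis imageI)
  qed
qed

lemma jacobi_half_shift:
  assumes "k \<noteq> 0" and same: "\<And>n. x n \<noteq> 0 \<Longrightarrow> c (n + m) = c n"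
  shows "jacobi_half c (\<lambda>k. x (int k - m)) k = jacobi c x (int k - m)"
proof -
  have "c (int k) * x (int k - m) = c (int k - m) * x (int k - m)"
    using same[of "int k - m"] by (cases "x (int k - m) = 0") auto
  moreover have "int (k - 1) - m = int k - m - 1" using assms(1) by simp
  ultimately show ?thesis unfolding jacobi_half_def jacobi_def using assms(1) by (simp add: algebra_simps)
qed

text \<open>A finitely supported vector on \<open>\<int>\<close> is moved far to the right, to a place where the
  coefficients repeat those on its support; there \<open>jacobi c\<close> acts like \<open>jacobi_half c\<close>.\<close>

lemma sections_bounded_below_if_half_line:
  assumes rec: "right_recurrent c" and half: "half_sections_bounded_below p c R C" and C: "0 \<le> C"
  shows "sections_bounded_below p c C"
  unfolding sections_bounded_below_def
proof (intro allI impI)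
  fix x :: "int \<Rightarrow> complex" and a b
  assume supp: "\<forall>n. n < a \<or> b < n \<longrightarrow> x n = 0"
  show "lp_mass p x {a..b} \<le> C * lp_mass p (jacobi c x) {a - 1..b + 1}"
  proof (cases "a \<le> b")
    case False
    then show ?thesis using C by (simp add: lp_mass_nonneg)
  next
    case True
    obtain m where m: "int R + 2 - a \<le> m" and same: "\<And>n. n \<in> {a..b} \<Longrightarrow> c (n + m) = c n"
      using rec unfolding right_recurrent_def by blast
    define f where "f k = int k - m" for k :: nat
    define x' where "x' k = x (f k)" for k
    have inj: "inj_on f S" for S unfolding f_def by (auto simp: inj_on_def)
    have "nat (a + m) - 1 = nat (a - 1 + m)" "nat (b + m) + 1 = nat (b + 1 + m)" using m True by arith+
    then have images: "f ` {nat (a + m)..nat (b + m)} = {a..b}"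
      "f ` {nat (a + m) - 1..nat (b + m) + 1} = {a - 1..b + 1}"
      unfolding f_def using image_shift_nat_interval[of "a - 1" m "b + 1"] image_shift_nat_interval[of a m b]
        m True by simp_all
    have "lp_mass p x' {nat (a + m)..nat (b + m)} \<le> C * lp_mass p (jacobi_half c x') {nat (a + m) - 1..nat (b + m) + 1}"
      using half supp m unfolding half_sections_bounded_below_def x'_def f_def by force
    moreover have "lp_mass p x' {nat (a + m)..nat (b + m)} = lp_mass p x {a..b}"
      unfolding x'_def using lp_mass_reindex[OF inj, of p x] images(1) by simp
    moreover have "lp_mass p (jacobi_half c x') {nat (a + m) - 1..nat (b + m) + 1}
        = lp_mass p (\<lambda>k. jacobi c x (f k)) {nat (a + m) - 1..nat (b + m) + 1}"
    proof (rule lp_mass_cong)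
      fix k assume "k \<in> {nat (a + m) - 1..nat (b + m) + 1}"
      then have "k \<noteq> 0" using m by auto
      moreover have "c (n + m) = c n" if "x n \<noteq> 0" for n
        using same[of n] supp that by (meson atLeastAtMost_iff not_le)
      ultimately show "norm (jacobi_half c x' k) = norm (jacobi c x (f k))"
        unfolding x'_def f_def by (simp add: jacobi_half_shift)
    qed
    moreover have "\<dots> = lp_mass p (jacobi c x) {a - 1..b + 1}"
      using lp_mass_reindex[OF inj, of p "jacobi c x"] images(2) by simp
    ultimately show ?thesis by simp
  qed
qed

lemma H_op_minus_eq_jacobi:
  "(\<lambda>x n. H_op lam \<alpha> \<theta> x n - z * x n) = jacobi (\<lambda>n. of_real (lam * sturm_pot \<alpha> \<theta> n) - z)"
  unfolding H_op_def jacobi_def by (auto simp: algebra_simps fun_eq_iff)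

lemma H_plus_minus_eq_jacobi_half:
  "(\<lambda>x n. H_plus lam \<alpha> \<theta> x n - z * x n) = jacobi_half (\<lambda>n. of_real (lam * sturm_pot \<alpha> \<theta> n) - z)"
  unfolding H_plus_def jacobi_half_def by (auto simp: algebra_simps fun_eq_iff)

lemma norm_sturm_coefficient_le:
  fixes z :: complex
  shows "norm (of_real (lam * sturm_pot \<alpha> \<theta> n) - z) \<le> \<bar>lam\<bar> + norm z"
  using norm_triangle_ineq4[of "complex_of_real (lam * sturm_pot \<alpha> \<theta> n)" z]
  unfolding sturm_pot_def by (auto simp: abs_mult)

theorem proposition5p19:
  fixes p :: ereal and \<alpha> \<theta> lam :: real
  assumes "1 \<le> p"
    and "0 \<le> \<alpha>" and "\<alpha> \<le> 1" and "\<alpha> \<notin> \<rat>"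
    and "0 \<le> \<theta>" and "\<theta> < 1"
  shows "op_spectrum (lp_space p) (H_op lam \<alpha> \<theta>)
         \<subseteq> op_spectrum (lp_space p) (H_plus lam \<alpha> \<theta>)"
proof
  fix z assume z: "z \<in> op_spectrum (lp_space p) (H_op lam \<alpha> \<theta>)"
  define c where "c n = of_real (lam * sturm_pot \<alpha> \<theta> n) - z" for n
  show "z \<in> op_spectrum (lp_space p) (H_plus lam \<alpha> \<theta>)"
  proof (rule ccontr)
    assume "z \<notin> op_spectrum (lp_space p) (H_plus lam \<alpha> \<theta>)"
    then have "bij_betw (jacobi_half c) (lp_space p) (lp_space p)"
      unfolding op_spectrum_def c_def H_plus_minus_eq_jacobi_half[symmetric] by simp
    then obtain R C where C: "0 \<le> C" and half: "half_sections_bounded_below p c R C"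
      using half_line_sections_bounded_below[OF assms(1)] by metis
    have "right_recurrent c"
      unfolding c_def by (rule right_recurrent_comp[OF sturm_pot_right_recurrent[OF assms(2-4)]])
    then have "sections_bounded_below p c C" using sections_bounded_below_if_half_line half C by blast
    then have "bij_betw (jacobi c) (lp_space p) (lp_space p)"
      using jacobi_bij_lp_if_sections_bounded_below[OF assms(1) _ C] norm_sturm_coefficient_le
      unfolding c_def by blast
    then show False using z unfolding op_spectrum_def c_def H_op_minus_eq_jacobi[symmetric] by simp
  qed
qed

end
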